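(* Let $\theta\mapsto\mathcal E_\theta$ be a family of quantum channels on $d\times d$ matrices with Liouville representation $T_\theta$, and let $\theta_0$ be a parameter value. Suppose that all the peripheral eigenvectors $\{\lim_{\theta\to\theta_0}|R_i\rangle\rangle\}_i$ of $T_\theta$ are mutually orthogonal, and that there exists some peripheral eigenvalue $\lambda_j$ with $\dot\lambda_j\neq0$. Then the sequential QFI of $N$ channels can achieve the Heisenberg limit at $\theta=\theta_0$: there exists an input state $\rho_0$ (independent of $N$) such that the quantum Fisher information of $\mathcal E_\theta^N(\rho_0)$ at $\theta=\theta_0$ scales as $N^2$, i.e. $\liminf_{N\to\infty}F^Q(\mathcal E_\theta^N(\rho_0))|_{\theta=\theta_0}/N^2>0$.
   Context: A quantum channel with Kraus operators $\{K_i^\theta\}$, $\mathcal E_\theta(\rho)=\sum_iK_i^\theta\rho K_i^{\theta\dagger}$, has Liouville representation $T_\theta=\sum_iK_i^\theta\otimes K_i^{\theta*}$, a $d^2\times d^2$ matrix with $T_\theta|\rho\rangle\rangle=|\mathcal E_\theta(\rho)\rangle\rangle$, where $|\rho\rangle\rangle=(\rho_{11},\rho_{12},\dots,\rho_{dd})^T$ is the vectorization of $\rho$ and $\langle\langle A|B\rangle\rangle=\operatorname{Tr}(A^\dagger B)$. Eigenvalues $\lambda_i$ of $T_\theta$ with $|\lambda_i|=1$ are called peripheral eigenvalues and their eigenvectors $|R_i\rangle\rangle$ (with corresponding eigenmatrices $R_i$) peripheral eigenvectors. Eigenvalues, eigenvectors and expansion coefficients are assumed to be continuously differentiable in $\theta$;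 a dot denotes $d/d\theta$. The quantum Fisher information of $\rho_\theta$ is $F^Q(\rho_\theta)=\operatorname{Tr}(\rho_\theta L_{\rho_\theta}^2)$ where the symmetric logarithmic derivative $L_{\rho_\theta}$ satisfies $2\dot\rho_\theta=\rho_\theta L_{\rho_\theta}+L_{\rho_\theta}\rho_\theta$. No ancilla and no interleaved control are used: the output state is $\mathcal E_\theta^N(\rho_0)$. *)

theory Defs
  imports "HOL-Analysis.Analysis"
begin

text \<open>d x d complex matrices are rendered as complex^'n^'n with 'n a finite index
type (d = CARD('n)). Superoperators (d^2 x d^2) act on complex^('n \<times> 'n).\<close>

definition cadj :: "complex^'n^'n \<Rightarrow> complex^'n^'n" where
  "cadj A = (\<chi> i j. cnj (A $ j $ i))"

definition cconj :: "complex^'n^'n \<Rightarrow> complex^'n^'n" where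
  "cconj A = (\<chi> i j. cnj (A $ i $ j))"

definition vecz :: "complex^'n^'n \<Rightarrow> complex^('n \<times> 'n)" where
  "vecz A = (\<chi> p. A $ fst p $ snd p)"

definition hs_inner :: "complex^'n^'n \<Rightarrow> complex^'n^'n \<Rightarrow> complex" where
  "hs_inner A B = trace (cadj A ** B)"

text \<open>Kronecker product, consistent with row-major vectorisation.\<close>
definition kron :: "complex^'n^'n \<Rightarrow> complex^'n^'n \<Rightarrow> complex^('n \<times> 'n)^('n \<times> 'n)" where
  "kron A B = (\<chi> p q. A $ fst p $ fst q * B $ snd p $ snd q)"

definition channel :: "('k::finite \<Rightarrow> complex^'n^'n) \<Rightarrow> complex^'n^'n \<Rightarrow> complex^'n^'n" where
  "channel K \<rho> = (\<Sum>i\<in>UNIV. K i ** \<rho> ** cadj (K i))"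

definition liouville :: "('k::finite \<Rightarrow> complex^'n^'n) \<Rightarrow> complex^('n \<times> 'n)^('n \<times> 'n)" where
  "liouville K = (\<Sum>i\<in>UNIV. kron (K i) (cconj (K i)))"

definition trace_preserving :: "('k::finite \<Rightarrow> complex^'n^'n) \<Rightarrow> bool" where
  "trace_preserving K \<longleftrightarrow> (\<Sum>i\<in>UNIV. cadj (K i) ** K i) = mat 1"

definition density :: "complex^'n^'n \<Rightarrow> bool" where
  "density \<rho> \<longleftrightarrow> cadj \<rho> = \<rho>
     \<and> (\<forall>x::complex^'n. 0 \<le> Re (\<Sum>i\<in>UNIV. cnj (x $ i) * (\<rho> *v x) $ i))
     \<and> trace \<rho> = 1"

definition is_SLD :: "complex^'n^'n \<Rightarrow> complex^'n^'n \<Rightarrow> complex^'n^'n \<Rightarrow> bool" where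
  "is_SLD \<rho> \<rho>' L \<longleftrightarrow> cadj L = L \<and> (2::real) *\<^sub>R \<rho>' = \<rho> ** L + L ** \<rho>"

definition QFI :: "complex^'n^'n \<Rightarrow> complex^'n^'n \<Rightarrow> real" where
  "QFI \<rho> \<rho>' = (THE f. \<exists>L. is_SLD \<rho> \<rho>' L \<and> f = Re (trace (\<rho> ** L ** L)))"

definition QFI_at :: "(real \<Rightarrow> complex^'n^'n) \<Rightarrow> real \<Rightarrow> real" where
  "QFI_at \<rho> \<theta>0 = QFI (\<rho> \<theta>0) (vector_derivative \<rho> (at \<theta>0))"

end

theory Submission
  imports Defs
begin

text \<open>
  Write \<open>T\<close> for the Liouville matrix at \<open>\<theta>0\<close> and \<open>\<lambda> = \<lambda>\<^sub>j(\<theta>0)\<close> for a peripheral eigenvalue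
  with \<open>\<lambda>\<^sub>j' \<noteq> 0\<close>. The powers of \<open>T\<close> are bounded: channels map densities to densities, whose
  entries have modulus at most \<open>1\<close>, and densities span all matrices. Hence \<open>\<lambda>\<close> has no Jordan
  block, the space splits as \<open>ker (T - \<lambda>) \<oplus> range (T - \<lambda>)\<close>, and the coefficient of \<open>R\<^sub>j\<close> in the
  kernel component is a linear functional \<open>ell\<close> with \<open>ell (T v) = \<lambda> ell v\<close>. Differentiating the
  eigenvalue equation gives \<open>ell (T' a) = \<lambda>\<^sub>j' ell a\<close> on the \<open>\<lambda>\<close>-eigenspace, so \<open>ell\<close> applied to the
  derivative \<open>\<Sum>\<^sub>k T\<^bsup>N-1-k\<^esup> T' T\<^bsup>k\<^esup> v\<close> of \<open>T\<^sup>N v\<close> equals \<open>N \<lambda>\<^bsup>N-1\<^esup> \<lambda>\<^sub>j' ell v\<close> up to a bounded error.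
  Pick a density \<open>\<rho>0\<close> with \<open>ell (vecz \<rho>0) \<noteq> 0\<close> and write \<open>ell (vecz M) = tr (G M)\<close>. The
  Cauchy-Schwarz inequality \<open>(Re tr (\<rho>' X))\<^sup>2 \<le> F\<^sup>Q tr (\<rho> X\<^sup>2)\<close> for the symmetric logarithmic
  derivative, applied to the Hermitian matrices \<open>G + G\<^sup>\<dagger>\<close> and \<open>\<i> (G - G\<^sup>\<dagger>)\<close>, turns the linear
  growth of \<open>tr (G \<rho>\<^sub>N')\<close> into \<open>F\<^sup>Q(\<rho>\<^sub>N) \<ge> c N\<^sup>2\<close>.
\<close>

section \<open>Complex matrix algebra\<close>

definition cscale :: "complex \<Rightarrow> complex^'n^'m \<Rightarrow> complex^'n^'m" where
  "cscale c A = (\<chi> i j. c * A $ i $ j)"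

definition cinner :: "complex^'n \<Rightarrow> complex^'n \<Rightarrow> complex" where
  "cinner x y = (\<Sum>i\<in>UNIV. cnj (x $ i) * y $ i)"

definition quad_form :: "complex^'n^'n \<Rightarrow> complex^'n \<Rightarrow> complex" where
  "quad_form A x = cinner x (A *v x)"

definition unvecz :: "complex^('n \<times> 'n) \<Rightarrow> complex^'n^'n" where
  "unvecz v = (\<chi> a b. v $ (a, b))"

lemma vecz_unvecz [simp]: "vecz (unvecz v) = v"
  and unvecz_vecz [simp]: "unvecz (vecz A) = A"
  by (auto simp: vecz_def unvecz_def vec_eq_iff)

lemma cadj_cadj [simp]: "cadj (cadj A) = A"
  by (simp add: cadj_def vec_eq_iff)

lemma cadj_mult: "cadj (A ** B) = cadj B ** cadj A"
  by (simp add: cadj_def vec_eq_iff matrix_matrix_mult_def mult.commute)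

lemma cadj_add [simp]: "cadj (A + B) = cadj A + cadj B"
  and cadj_diff [simp]: "cadj (A - B) = cadj A - cadj B"
  and cadj_scaleR [simp]: "cadj (r *\<^sub>R A) = r *\<^sub>R cadj A"
  by (simp_all add: cadj_def vec_eq_iff)

lemma cadj_zero [simp]: "cadj 0 = 0"
  by (simp add: cadj_def vec_eq_iff)

lemma cadj_sum: "cadj (sum f S) = (\<Sum>x\<in>S. cadj (f x))"
  by (induction S rule: infinite_finite_induct) simp_all

lemma cadj_entry: "cadj H = H \<Longrightarrow> cnj (H $ i $ j) = H $ j $ i"
  by (drule arg_cong[where f = "\<lambda>A. A $ j $ i"]) (simp add: cadj_def)

lemma trace_cadj: "trace (cadj A) = cnj (trace A)"
  by (simp add: cadj_def trace_def)

lemma trace_cscale: "trace (cscale c A) = c * trace A"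
  by (simp add: cscale_def trace_def sum_distrib_left)

lemma trace_scaleR: "trace (r *\<^sub>R (A::complex^'n^'n)) = r *\<^sub>R trace A"
  by (simp add: trace_def scaleR_sum_right)

lemma trace_zero [simp]: "trace (0::'a::semiring_1^'n^'n) = 0"
  by (simp add: trace_def)

lemma trace_sum: "trace (sum f S :: 'a::comm_semiring_1^'n^'n) = (\<Sum>x\<in>S. trace (f x))"
  by (induction S rule: infinite_finite_induct) (simp_all add: trace_add)

lemma trace_mult_cycle: "trace ((A::'a::comm_semiring_1^'n^'n) ** B ** C) = trace (B ** C ** A)"
  by (metis matrix_mul_assoc trace_mul_sym)

lemma cscale_mult_right: "A ** cscale c B = cscale c (A ** B)"
  by (simp add: cscale_def vec_eq_iff matrix_matrix_mult_def sum_distrib_left mult.left_commute)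

lemma matrix_add_rdistrib: "((B::'a::semiring_1^'n^'m) + C) ** A = B ** A + C ** A"
  by (simp add: vec_eq_iff matrix_matrix_mult_def sum.distrib distrib_right)

lemma matrix_diff_ldistrib: "(A::'a::ring_1^'n^'m) ** (B - C) = A ** B - A ** C"
  by (simp add: vec_eq_iff matrix_matrix_mult_def sum_subtractf right_diff_distrib)

lemma matrix_diff_rdistrib: "((B::'a::ring_1^'n^'m) - C) ** A = B ** A - C ** A"
  by (simp add: vec_eq_iff matrix_matrix_mult_def sum_subtractf left_diff_distrib)

lemma matrix_sum_ldistrib: "(A::'a::semiring_1^'n^'m) ** sum f S = (\<Sum>x\<in>S. A ** f x)"
  by (induction S rule: infinite_finite_induct) (simp_all add: matrix_add_ldistrib)

lemma matrix_vector_sum_ldistrib: "(A::'a::semiring_1^'m^'k) *v sum g S = (\<Sum>x\<in>S. A *v g x)"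
  by (induction S rule: infinite_finite_induct) (simp_all add: matrix_vector_right_distrib)

lemma matrix_vector_sum_rdistrib: "sum f S *v (v::'a::semiring_1^'m) = (\<Sum>x\<in>S. f x *v v)"
  by (induction S rule: infinite_finite_induct) (simp_all add: matrix_vector_mult_add_rdistrib)

lemma matrix_vector_scaleR_left: "(r *\<^sub>R (A::complex^'m^'k)) *v v = r *\<^sub>R (A *v v)"
  and matrix_vector_scaleR_right: "(A::complex^'m^'k) *v (r *\<^sub>R v) = r *\<^sub>R (A *v v)"
  by (simp_all add: vec_eq_iff matrix_vector_mult_def scaleR_sum_right)

lemma scaleR_as_smult: "(r::real) *\<^sub>R (x::complex^'m) = of_real r *s x"
  by (simp add: vec_eq_iff scaleR_conv_of_real[where 'a=complex])

lemma norm_smult: "norm (c *s (x::complex^'m)) = cmod c * norm x"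
  by (simp add: norm_vec_def norm_mult L2_set_right_distrib)

lemma sum_UNIV_pairs: "(\<Sum>q\<in>UNIV. f q) = (\<Sum>a\<in>UNIV. \<Sum>b\<in>UNIV. f (a, b))"
  by (simp add: sum.cartesian_product)

lemma vector_as_sum_axis: "(v::complex^'m) = (\<Sum>p\<in>UNIV. v $ p *s axis p 1)"
proof -
  have "v$p * axis p 1 $ q = (if p = q then v$q else 0)" for p q
    by (simp add: axis_def)
  then show ?thesis by (simp add: vec_eq_iff sum_component)
qed

lemma inner_as_trace: "inner (A::complex^'n^'n) B = Re (trace (cadj A ** B))"
proof -
  have "trace (cadj A ** B) = (\<Sum>i\<in>UNIV. \<Sum>j\<in>UNIV. cnj (A$i$j) * B$i$j)"
    unfolding trace_def cadj_def matrix_matrix_mult_def by simp (rule sum.swap)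
  then show ?thesis
    by (simp add: inner_vec_def inner_complex_def Re_sum)
qed

lemma cinner_add_left: "cinner (x + y) z = cinner x z + cinner y z"
  and cinner_add_right: "cinner x (y + z) = cinner x y + cinner x z"
  and cinner_smult_left: "cinner (c *s x) y = cnj c * cinner x y"
  and cinner_smult_right: "cinner x (c *s y) = c * cinner x y"
  by (simp_all add: cinner_def sum.distrib algebra_simps sum_distrib_left)

lemma cinner_commute: "cnj (cinner x y) = cinner y x"
  by (simp add: cinner_def mult.commute)

lemma cinner_axis: "cinner (axis a 1) v = v $ a"
proof -
  have "cnj (axis a 1 $ i) * v$i = (if i = a then v$a else 0)" for i
    by (simp add: axis_def)
  then show ?thesis by (simp add: cinner_def)
qed

lemma cinner_adjoint: "cinner x (A *v y) = cinner (cadj A *v x) y"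
proof -
  have "cinner x (A *v y) = (\<Sum>i\<in>UNIV. \<Sum>j\<in>UNIV. cnj (x$i) * A$i$j * y$j)"
    by (simp add: cinner_def matrix_vector_mult_def sum_distrib_left mult.assoc)
  also have "\<dots> = (\<Sum>j\<in>UNIV. \<Sum>i\<in>UNIV. cnj (x$i) * A$i$j * y$j)"
    by (rule sum.swap)
  also have "\<dots> = cinner (cadj A *v x) y"
    by (simp add: cinner_def cadj_def matrix_vector_mult_def sum_distrib_right sum_distrib_left ac_simps)
  finally show ?thesis .
qed

lemma cnj_mult_self: "cnj z * z = of_real ((cmod z)\<^sup>2)"
  using complex_norm_square[of z] by (simp add: mult.commute)

lemma cinner_self: "cinner x x = of_real ((norm x)\<^sup>2)"
proof -
  have "cinner x x = of_real (\<Sum>i\<in>UNIV. (cmod (x $ i))\<^sup>2)"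
    by (simp add: cinner_def cnj_mult_self)
  then show ?thesis
    by (simp add: norm_vec_def L2_set_def sum_nonneg)
qed

lemma quad_form_expand:
  "quad_form A (x + c *s y) =
     quad_form A x + c * cinner x (A *v y) + cnj c * cinner y (A *v x) + cnj c * c * quad_form A y"
  by (simp add: quad_form_def matrix_vector_right_distrib vector_scalar_commute cinner_add_left
      cinner_add_right cinner_smult_left cinner_smult_right algebra_simps)

lemma cinner_sum_right: "cinner x (sum g S) = (\<Sum>i\<in>S. cinner x (g i))"
  by (simp add: cinner_def sum_component sum_distrib_left) (rule sum.swap)

lemma quad_form_sum: "quad_form (sum f S) x = (\<Sum>i\<in>S. quad_form (f i) x)"
  by (simp add: quad_form_def matrix_vector_sum_rdistrib cinner_sum_right)

lemma quad_form_sandwich: "quad_form (A ** \<rho> ** cadj A) x = quad_form \<rho> (cadj A *v x)"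
  by (simp add: quad_form_def cinner_adjoint flip: matrix_vector_mul_assoc)

lemma matrix_vector_mult_axis: "(A *v axis b 1) $ i = A $ i $ b"
proof -
  have "A$i$j * axis b 1 $ j = (if j = b then A$i$b else 0)" for j
    by (simp add: axis_def)
  then show ?thesis by (simp add: matrix_vector_mult_def)
qed

lemma cinner_axis_mult_axis: "cinner (axis a 1) (A *v axis b 1) = A $ a $ b"
  by (simp add: cinner_axis matrix_vector_mult_axis)

lemma quad_form_axis: "quad_form A (axis a 1) = A $ a $ a"
  by (simp add: quad_form_def cinner_axis_mult_axis)

lemma quad_form_hermitian_real: "cadj M = M \<Longrightarrow> Im (quad_form M z) = 0"
  by (metis cinner_adjoint cinner_commute cnj.simps(2) neg_equal_zero quad_form_def)

lemma trace_sandwich: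
  "trace (cadj Y ** \<rho> ** Y) = (\<Sum>k\<in>UNIV. quad_form \<rho> (column k (Y::complex^'n^'n)))"
  unfolding trace_def
proof (rule sum.cong[OF refl])
  fix k
  have "(cadj Y ** \<rho> ** Y)$k$k = (\<Sum>b\<in>UNIV. \<Sum>a\<in>UNIV. cnj (Y$a$k) * \<rho>$a$b * Y$b$k)"
    by (simp add: matrix_matrix_mult_def cadj_def sum_distrib_right)
  also have "\<dots> = (\<Sum>a\<in>UNIV. \<Sum>b\<in>UNIV. cnj (Y$a$k) * \<rho>$a$b * Y$b$k)"
    by (rule sum.swap)
  also have "\<dots> = quad_form \<rho> (column k Y)"
    by (simp add: quad_form_def cinner_def column_def matrix_vector_mult_def sum_distrib_left mult.assoc)
  finally show "(cadj Y ** \<rho> ** Y)$k$k = quad_form \<rho> (column k Y)" .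
qed

lemma column_matrix_mult: "column k (A ** B) = A *v column k B"
  by (simp add: column_def matrix_matrix_mult_def matrix_vector_mult_def vec_eq_iff)

lemma matrix_eq_0_iff_columns: "A = 0 \<longleftrightarrow> (\<forall>k. column k A = 0)"
  by (auto simp: column_def vec_eq_iff)

lemma linear_image_range_eq_range:
  fixes f :: "'a::euclidean_space \<Rightarrow> 'a"
  assumes f: "linear f" and ker: "\<And>x. f (f x) = 0 \<Longrightarrow> f x = 0"
  shows "f ` range f = range f"
proof -
  have sub: "subspace (range f)" using f by (simp add: linear_subspace_image)
  have inj: "inj_on f (range f)"
  proof (rule inj_onI)
    fix x y assume "x \<in> range f" "y \<in> range f" "f x = f y"
    then obtain a b where ab: "x = f a" "y = f b" by auto
    then have "f (f (a - b)) = 0" using \<open>f x = f y\<close> by (simp add: linear_diff[OF f])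
    then show "x = y" using ker[of "a - b"] ab by (simp add: linear_diff[OF f])
  qed
  have "span (range f) = range f"
    using sub by (simp add: span_eq_iff)
  then have "dim (f ` range f) = dim (range f)"
    using dim_image_eq[OF f, of "range f"] inj by argo
  moreover have "subspace (f ` range f)" using f sub by (simp add: linear_subspace_image)
  ultimately show ?thesis using sub by (simp add: image_mono subspace_dim_equal)
qed

section \<open>Positive semidefinite and density matrices\<close>

definition psd :: "complex^'n^'n \<Rightarrow> bool" where
  "psd A \<longleftrightarrow> (\<forall>x. 0 \<le> Re (quad_form A x))"

lemma density_psd: "density \<rho> \<Longrightarrow> psd \<rho>"
  by (simp add: density_def psd_def quad_form_def cinner_def)

lemma density_hermitian: "density \<rho> \<Longrightarrow> cadj \<rho> = \<rho>"
  by (simp add: density_def)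

lemma psd_trace_sandwich_nonneg: "psd \<rho> \<Longrightarrow> 0 \<le> Re (trace (cadj Y ** \<rho> ** Y))"
  unfolding trace_sandwich psd_def by (simp add: sum_nonneg Re_sum)

lemma nonneg_quadratic_discriminant:
  fixes a b c :: real
  assumes "\<And>t. 0 \<le> a + 2*b*t + c*t\<^sup>2"
  shows "b\<^sup>2 \<le> a*c"
proof -
  have a0: "0 \<le> a" using assms[of 0] by simp
  consider "c > 0" | "c = 0" | "c < 0" by linarith
  then show ?thesis
  proof cases
    case 1
    have "0 \<le> a + 2*b*(-b/c) + c*(-b/c)\<^sup>2" by (rule assms)
    also have "\<dots> = a - b\<^sup>2/c" using 1 by (simp add: field_simps power2_eq_square)
    finally show ?thesis using 1 by (simp add: field_simps mult.commute)
  next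
    case 2
    show ?thesis
    proof (rule ccontr)
      assume "\<not> ?thesis"
      then have "b \<noteq> 0" using 2 by auto
      have "0 \<le> a + 2*b*(-(a+1)/(2*b)) + c*(-(a+1)/(2*b))\<^sup>2" by (rule assms)
      also have "\<dots> = -1" using 2 \<open>b \<noteq> 0\<close> by (simp add: field_simps)
      finally show False by simp
    qed
  next
    case 3
    define t where "t = sqrt ((a+1)/(-c))"
    have "0 \<le> (a+1)/(-c)" using 3 a0 by (intro divide_nonneg_pos) auto
    then have "t\<^sup>2 = (a+1)/(-c)" unfolding t_def by simp
    moreover have "0 \<le> a + 2*b*t + c*t\<^sup>2" "0 \<le> a + 2*b*(-t) + c*(-t)\<^sup>2" by (rule assms)+
    ultimately have "0 \<le> 2*a - 2*(a+1)" using 3 by (simp add: field_simps)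
    then show ?thesis by simp
  qed
qed

lemma psd_kernel:
  assumes psd: "psd \<rho>" and herm: "cadj \<rho> = \<rho>" and x: "Re (quad_form \<rho> x) = 0"
  shows "\<rho> *v x = 0"
proof -
  define y where "y = \<rho> *v x"
  have xy: "cinner x (\<rho> *v y) = cinner y y" and yx: "cinner y (\<rho> *v x) = cinner y y"
    by (simp_all add: cinner_adjoint herm y_def)
  have "0 \<le> 0 + 2 * (- (norm y)\<^sup>2) * t + Re (quad_form \<rho> y) * t\<^sup>2" for t :: real
  proof -
    have "0 \<le> Re (quad_form \<rho> (x + complex_of_real (-t) *s y))"
      using psd unfolding psd_def by blast
    also have "\<dots> = 0 + 2 * (- (norm y)\<^sup>2) * t + Re (quad_form \<rho> y) * t\<^sup>2"
      unfolding quad_form_expand xy yx using x by (simp add: cinner_self power2_eq_square)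
    finally show ?thesis .
  qed
  from nonneg_quadratic_discriminant[OF this] have "((norm y)\<^sup>2)\<^sup>2 \<le> 0" by simp
  then show ?thesis by (simp add: y_def)
qed

lemma density_diagonal:
  assumes "density \<rho>"
  shows "Im (\<rho>$a$a) = 0" "0 \<le> Re (\<rho>$a$a)" "(\<Sum>c\<in>UNIV. Re (\<rho>$c$c)) = 1"
proof -
  show "Im (\<rho>$a$a) = 0"
    using cadj_entry[OF density_hermitian[OF assms], of a a] by (metis cnj.simps(2) neg_equal_zero)
  show "0 \<le> Re (\<rho>$a$a)"
    using density_psd[OF assms] by (metis psd_def quad_form_axis)
  show "(\<Sum>c\<in>UNIV. Re (\<rho>$c$c)) = 1"
    using assms by (simp add: density_def trace_def flip: Re_sum)
qed

text \<open>Test the positivity of \<open>\<rho>\<close> on \<open>e\<^sub>a + w e\<^sub>b\<close>, with the phase \<open>w\<close> chosen against \<open>\<rho>\<^sub>a\<^sub>b\<close>.\<close>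

lemma density_entry_bound:
  assumes d: "density \<rho>"
  shows "cmod (\<rho>$a$b) \<le> 1"
proof -
  note diag = density_diagonal[OF d]
  have diag_le: "Re (\<rho>$a$a) \<le> 1"
    using member_le_sum[of a UNIV "\<lambda>c. Re (\<rho>$c$c)"] diag(2,3) by simp
  consider "a = b" | "\<rho>$a$b = 0" | "a \<noteq> b" "\<rho>$a$b \<noteq> 0" by blast
  then show ?thesis
  proof cases
    case 1
    then show ?thesis using diag_le diag(1,2)[of a] by (simp add: cmod_eq_Re)
  next
    case 2
    then show ?thesis by simp
  next
    case 3
    have two_le: "Re (\<rho>$a$a) + Re (\<rho>$b$b) \<le> 1"
      using sum_mono2[of UNIV "{a, b}" "\<lambda>c. Re (\<rho>$c$c)"] diag(2,3) 3(1) by simp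
    define z where "z = \<rho>$a$b"
    define w where "w = - cnj z / cmod z"
    have nz: "cmod z \<noteq> 0" using 3 z_def by simp
    have zz: "cnj z * z = of_real (cmod z) * of_real (cmod z)"
      by (simp add: cnj_mult_self power2_eq_square)
    have "w * z = - (cnj z * z) / of_real (cmod z)"
      by (simp add: w_def)
    also have "\<dots> = - of_real (cmod z)"
      using nz by (simp add: zz)
    finally have wz: "w * z = - of_real (cmod z)" .
    have "cmod w = 1" using nz by (simp add: w_def norm_divide)
    then have ww: "cnj w * w = 1"
      by (simp add: cnj_mult_self)
    have "quad_form \<rho> (axis a 1 + w *s axis b 1) = \<rho>$a$a + \<rho>$b$b + w * z + cnj (w * z)"
      using cadj_entry[OF density_hermitian[OF d], of a b] ww
      by (simp add: quad_form_expand quad_form_axis cinner_axis_mult_axis z_def)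
    also have "\<dots> = \<rho>$a$a + \<rho>$b$b - 2 * of_real (cmod z)"
      by (simp add: wz)
    finally have "0 \<le> Re (\<rho>$a$a + \<rho>$b$b - 2 * of_real (cmod z))"
      using density_psd[OF d] unfolding psd_def by metis
    then show ?thesis using two_le diag(2)[of a] diag(2)[of b] unfolding z_def by simp
  qed
qed

lemma norm_vecz_density_le:
  fixes \<rho> :: "complex^'n^'n"
  assumes "density \<rho>"
  shows "norm (vecz \<rho>) \<le> real CARD('n \<times> 'n)"
proof -
  have "norm (vecz \<rho>) \<le> (\<Sum>p\<in>UNIV. cmod (vecz \<rho> $ p))"
    unfolding norm_vec_def by (rule L2_set_le_sum) simp
  also have "\<dots> \<le> (\<Sum>p\<in>(UNIV::('n\<times>'n) set). 1)"
    by (rule sum_mono) (simp add: vecz_def density_entry_bound[OF assms])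
  finally show ?thesis by simp
qed

definition entry_sum :: "complex^'n^'n \<Rightarrow> real" where
  "entry_sum A = (\<Sum>a\<in>UNIV. \<Sum>b\<in>UNIV. cmod (A $ a $ b))"

lemma density_trace_bound:
  assumes "density \<rho>"
  shows "Re (trace (\<rho> ** Y)) \<le> entry_sum Y"
proof -
  have "trace (\<rho> ** Y) = (\<Sum>a\<in>UNIV. \<Sum>b\<in>UNIV. \<rho>$a$b * Y$b$a)"
    by (simp add: trace_def matrix_matrix_mult_def)
  then have "Re (trace (\<rho> ** Y)) \<le> cmod (\<Sum>a\<in>UNIV. \<Sum>b\<in>UNIV. \<rho>$a$b * Y$b$a)"
    by (metis complex_Re_le_cmod)
  also have "\<dots> \<le> (\<Sum>a\<in>UNIV. \<Sum>b\<in>UNIV. cmod (\<rho>$a$b * Y$b$a))"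
    by (rule order_trans[OF norm_sum sum_mono]) (rule norm_sum)
  also have "\<dots> \<le> (\<Sum>a\<in>UNIV. \<Sum>b\<in>UNIV. cmod (Y$b$a))"
    by (intro sum_mono)
       (simp add: norm_mult mult_left_le_one_le density_entry_bound[OF assms])
  also have "\<dots> = entry_sum Y"
    unfolding entry_sum_def by (rule sum.swap)
  finally show ?thesis .
qed

definition outer :: "complex^'n \<Rightarrow> complex^'n^'n" where
  "outer x = (\<chi> a b. x$a * cnj (x$b))"

lemma outer_density:
  assumes "x \<noteq> 0"
  shows "density (cscale (1 / of_real ((norm x)\<^sup>2)) (outer x))"
proof -
  define c :: complex where "c = 1 / of_real ((norm x)\<^sup>2)"
  have "quad_form (cscale c (outer x)) y = c * of_real ((cmod (cinner x y))\<^sup>2)" for y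
  proof -
    have "quad_form (cscale c (outer x)) y = c * (cinner y x * cinner x y)"
      by (simp add: quad_form_def cinner_def outer_def cscale_def matrix_vector_mult_def
          sum_distrib_left sum_distrib_right ac_simps) (rule sum.swap)
    then show ?thesis
      by (metis cinner_commute cnj_mult_self)
  qed
  moreover have "trace (cscale c (outer x)) = c * cinner x x"
    unfolding trace_cscale by (simp add: trace_def outer_def cinner_def mult.commute)
  moreover have "cadj (cscale c (outer x)) = cscale c (outer x)"
    by (simp add: c_def outer_def cadj_def cscale_def vec_eq_iff mult.commute)
  ultimately show ?thesis
    using assms by (simp add: density_def c_def cinner_self flip: quad_form_def[unfolded cinner_def])
qed

lemma vecz_cscale: "vecz (cscale c A) = c *s vecz A"
  by (simp add: vecz_def cscale_def vec_eq_iff)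

lemma axis_offdiagonal_outer_combination:
  fixes a b :: "'n::finite"
  assumes "a \<noteq> b"
  defines "v w \<equiv> axis a 1 + w *s axis b (1::complex)"
  shows "axis (a, b) 1 = (1/4) *s vecz (outer (v 1)) + (\<i>/4) *s vecz (outer (v \<i>))
        + (-1/4) *s vecz (outer (v (-1))) + (-\<i>/4) *s vecz (outer (v (-\<i>)))"
proof -
  have entry: "vecz (outer (v w)) $ (i, j) =
        ((if i = a then 1 else 0) + w * (if i = b then 1 else 0)) *
        cnj ((if j = a then 1 else 0) + w * (if j = b then 1 else 0))" for w i j
    by (simp add: vecz_def outer_def v_def axis_def)
  show ?thesis
    unfolding vec_eq_iff
  proof
    fix p :: "'n \<times> 'n"
    obtain i j where p: "p = (i, j)" by fastforce
    show "axis (a, b) 1 $ p = ((1/4) *s vecz (outer (v 1)) + (\<i>/4) *s vecz (outer (v \<i>))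
        + (-1/4) *s vecz (outer (v (-1))) + (-\<i>/4) *s vecz (outer (v (-\<i>)))) $ p"
      unfolding p using assms(1)
      by (cases "i = a"; cases "i = b"; cases "j = a"; cases "j = b") (simp_all add: entry axis_def)
  qed
qed

lemma vecz_density_induct [case_names zero add smult density]:
  fixes P :: "complex^('n::finite \<times> 'n) \<Rightarrow> bool"
  assumes zero: "P 0" and add: "\<And>x y. P x \<Longrightarrow> P y \<Longrightarrow> P (x + y)"
    and smult: "\<And>c x. P x \<Longrightarrow> P (c *s x)" and density: "\<And>\<rho>. density \<rho> \<Longrightarrow> P (vecz \<rho>)"
  shows "P v"
proof -
  have outer: "P (vecz (outer x))" for x :: "complex^'n"
  proof (cases "x = 0")
    case True
    then have "vecz (outer x) = 0" by (simp add: vecz_def outer_def vec_eq_iff)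
    then show ?thesis using zero by simp
  next
    case False
    have "vecz (outer x) = of_real ((norm x)\<^sup>2) *s vecz (cscale (1 / of_real ((norm x)\<^sup>2)) (outer x))"
      using False by (simp add: vecz_cscale vector_smult_assoc)
    then show ?thesis by (metis smult density outer_density[OF False])
  qed
  have axis: "P (axis (a, b) 1)" for a b
  proof (cases "a = b")
    case True
    then have "axis (a, b) 1 = vecz (outer (axis a 1))"
      by (auto simp: vecz_def outer_def axis_def vec_eq_iff)
    then show ?thesis by (simp add: outer)
  next
    case False
    then show ?thesis
      unfolding axis_offdiagonal_outer_combination[OF False] by (intro add smult outer)
  qed
  have sum: "P (\<Sum>p\<in>S. f p)" if "\<And>p. P (f p)" for S :: "'x set" and f
    using that by (induction S rule: infinite_finite_induct) (simp_all add: zero add)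
  have "P (axis p 1)" for p
    using axis by (cases p) simp
  then show ?thesis
    by (subst vector_as_sum_axis) (intro sum smult)
qed

section \<open>Symmetric logarithmic derivatives\<close>

lemma hermitian_square_kernel:
  assumes "cadj H = H" and "H *v (H *v x) = 0"
  shows "H *v x = 0"
proof -
  have "of_real ((norm (H *v x))\<^sup>2) = cinner x (H *v (H *v x))"
    by (simp add: cinner_self cinner_adjoint assms(1))
  then show ?thesis using assms(2) by (simp add: cinner_def)
qed

lemma hermitian_square_factor:
  fixes H :: "complex^'n^'n"
  assumes herm: "cadj H = H"
  shows "\<exists>G. H ** H ** G = H"
proof -
  have range_eq: "(*v) H ` range ((*v) H) = range ((*v) H)"
    using linear_image_range_eq_range[OF matrix_vector_mul_linear hermitian_square_kernel[OF herm]] .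
  have "column k H = H *v axis k 1" for k
    by (simp add: vec_eq_iff column_def matrix_vector_mult_axis)
  then have in_image: "column k H \<in> (*v) H ` range ((*v) H)" for k
    unfolding range_eq by simp
  have "\<forall>k. \<exists>y. H *v (H *v y) = column k H"
  proof
    fix k
    obtain z where "column k H = H *v z" "z \<in> range ((*v) H)"
      using in_image[of k] by (rule imageE)
    then show "\<exists>y. H *v (H *v y) = column k H" by auto
  qed
  from choice[OF this] obtain g where g: "\<And>k. H *v (H *v g k) = column k H"
    by blast
  define G where "G = (\<chi> i k. g k $ i)"
  have "column k G = g k" for k
    by (simp add: G_def column_def vec_eq_iff)
  then have "column k (H ** H ** G) = column k H" for k
    unfolding column_matrix_mult g[symmetric] matrix_vector_mul_assoc by simp
  then have "H ** H ** G = H"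
    by (simp add: vec_eq_iff column_def)
  then show ?thesis by blast
qed

text \<open>From \<open>H H G = H\<close>: the columns of \<open>D = H G H - H = H (G H - 1)\<close> lie in the range of \<open>H\<close>
  and are annihilated by \<open>H\<close>, hence vanish.\<close>

lemma hermitian_generalized_inverse:
  fixes H :: "complex^'n^'n"
  assumes herm: "cadj H = H"
  shows "\<exists>G. H ** G ** H = H"
proof -
  obtain G where HHG: "H ** H ** G = H"
    using hermitian_square_factor[OF herm] by blast
  define D where "D = H ** G ** H - H"
  have "column k D = 0" for k
  proof -
    have "D = H ** (G ** H - mat 1)"
      by (simp add: D_def matrix_diff_ldistrib matrix_mul_assoc)
    then have "column k D = H *v column k (G ** H - mat 1)"
      by (simp add: column_matrix_mult)
    moreover have "H ** D = 0"
      by (simp add: D_def matrix_diff_ldistrib matrix_mul_assoc HHG)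
    then have "H *v column k D = 0"
      by (simp add: matrix_eq_0_iff_columns column_matrix_mult)
    ultimately show ?thesis
      using hermitian_square_kernel[OF herm] by simp
  qed
  then have "D = 0"
    by (simp add: matrix_eq_0_iff_columns)
  then show ?thesis
    unfolding D_def by auto
qed

definition anticomm :: "complex^'n^'n \<Rightarrow> complex^'n^'n \<Rightarrow> complex^'n^'n" where
  "anticomm \<rho> L = \<rho> ** L + L ** \<rho>"

lemma linear_anticomm: "linear (anticomm \<rho>)"
  by (rule linearI)
     (simp_all add: anticomm_def matrix_add_ldistrib matrix_add_rdistrib scalar_matrix_assoc
      matrix_scalar_ac scaleR_add_right)

lemma anticomm_cadj: "cadj \<rho> = \<rho> \<Longrightarrow> anticomm \<rho> (cadj A) = cadj (anticomm \<rho> A)"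
  by (simp add: anticomm_def cadj_mult add.commute)

lemma anticomm_self_adjoint:
  assumes "cadj \<rho> = \<rho>"
  shows "inner (anticomm \<rho> A) B = inner A (anticomm \<rho> B)"
proof -
  have "trace (\<rho> ** cadj A ** B) = trace (cadj A ** (B ** \<rho>))"
    by (metis matrix_mul_assoc trace_mul_sym)
  then show ?thesis
    using assms
    by (simp add: inner_as_trace anticomm_def cadj_mult matrix_add_ldistrib matrix_add_rdistrib
        trace_add matrix_mul_assoc)
qed

lemma range_anticomm:
  assumes "cadj \<rho> = \<rho>"
  shows "range (anticomm \<rho>) = orthogonal_comp (anticomm \<rho> -` {0})"
proof -
  have adj: "adjoint (anticomm \<rho>) = anticomm \<rho>"
    by (rule adjoint_unique) (simp add: anticomm_self_adjoint[OF assms])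
  have "anticomm \<rho> -` {0} = orthogonal_comp (range (anticomm \<rho>))"
    using ker_orthogonal_comp_adjoint[OF linear_anticomm, of \<rho>] unfolding adj .
  moreover have "subspace (range (anticomm \<rho>))"
    by (rule linear_subspace_image[OF linear_anticomm subspace_UNIV])
  ultimately show ?thesis
    by (simp add: orthogonal_comp_self)
qed

text \<open>If \<open>\<rho> A = - A \<rho>\<close>, then \<open>tr (A\<^sup>\<dagger> \<rho> A) = - tr (A \<rho> A\<^sup>\<dagger>)\<close> is both \<open>\<ge> 0\<close> and \<open>\<le> 0\<close>.\<close>

lemma anticomm_eq_0D:
  assumes psd: "psd \<rho>" and herm: "cadj \<rho> = \<rho>" and A: "anticomm \<rho> A = 0"
  shows "\<rho> ** A = 0" "A ** \<rho> = 0"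
proof -
  have anti: "\<rho> ** A = - (A ** \<rho>)"
    using A by (simp add: anticomm_def eq_neg_iff_add_eq_0)
  have "trace (cadj A ** \<rho> ** A) = - trace (A ** \<rho> ** cadj A)"
  proof -
    have "trace (cadj A ** \<rho> ** A) = trace (cadj A ** - (A ** \<rho>))"
      by (simp add: anti flip: matrix_mul_assoc)
    also have "\<dots> = - trace (cadj A ** (A ** \<rho>))"
      by (simp add: matrix_mul_assoc[symmetric] trace_def matrix_matrix_mult_def sum_negf)
    also have "trace (cadj A ** (A ** \<rho>)) = trace (A ** \<rho> ** cadj A)"
      by (rule trace_mul_sym)
    finally show ?thesis .
  qed
  moreover have "0 \<le> Re (trace (cadj A ** \<rho> ** A))"
    and "0 \<le> Re (trace (cadj (cadj A) ** \<rho> ** cadj A))"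
    by (rule psd_trace_sandwich_nonneg[OF psd])+
  ultimately have "Re (trace (cadj A ** \<rho> ** A)) = 0"
    by simp
  then have "(\<Sum>k\<in>UNIV. Re (quad_form \<rho> (column k A))) = 0"
    by (simp add: trace_sandwich Re_sum)
  moreover have "\<And>k. 0 \<le> Re (quad_form \<rho> (column k A))"
    using psd by (simp add: psd_def)
  ultimately have "\<And>k. \<rho> *v column k A = 0"
    using psd_kernel[OF psd herm] by (simp add: sum_nonneg_eq_0_iff)
  then show "\<rho> ** A = 0" by (simp add: matrix_eq_0_iff_columns column_matrix_mult)
  then show "A ** \<rho> = 0" using anti by simp
qed

text \<open>With \<open>H = A + A\<^sup>\<dagger>\<close>, the columns of \<open>H\<close> lie in \<open>ker \<rho>\<close>, so \<open>H M H = 0\<close>, and a generalised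
  inverse \<open>H G H = H\<close> gives \<open>tr (H M) = tr (G H M H) = 0\<close>.\<close>

lemma trace_kernel_annihilator:
  assumes herm: "cadj \<rho> = \<rho>" and hM: "cadj M = M"
    and kerM: "\<And>x y. \<rho> *v x = 0 \<Longrightarrow> \<rho> *v y = 0 \<Longrightarrow> cinner x (M *v y) = 0"
    and A1: "\<rho> ** A = 0" and A2: "A ** \<rho> = 0"
  shows "Re (trace (cadj A ** M)) = 0"
proof -
  define H where "H = A + cadj A"
  have hH: "cadj H = H" by (simp add: H_def add.commute)
  have "\<rho> ** cadj A = cadj (A ** \<rho>)" by (simp add: cadj_mult herm)
  then have "\<rho> ** H = 0" by (simp add: H_def matrix_add_ldistrib A1 A2)
  then have colH: "\<rho> *v column b H = 0" for b
    by (simp add: matrix_eq_0_iff_columns column_matrix_mult)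
  have "(H ** M ** H)$a$b = cinner (column a H) (M *v column b H)" for a b
    by (simp add: cinner_def matrix_matrix_mult_def matrix_vector_mult_def column_def
        cadj_entry[OF hH] sum_distrib_left sum_distrib_right mult.assoc) (rule sum.swap)
  then have HMH: "H ** M ** H = 0"
    using kerM colH by (simp add: vec_eq_iff)
  obtain G where G: "H ** G ** H = H"
    using hermitian_generalized_inverse[OF hH] by blast
  have "trace (H ** M) = trace (H ** (G ** H ** M))"
    using G by (simp add: matrix_mul_assoc)
  also have "\<dots> = trace (G ** H ** M ** H)"
    by (rule trace_mul_sym)
  also have "\<dots> = trace (G ** (H ** M ** H))"
    by (simp add: matrix_mul_assoc)
  also have "\<dots> = 0"
    by (simp add: HMH)
  finally have "trace (H ** M) = 0" .
  moreover have "cnj (trace (cadj A ** M)) = trace (A ** M)"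
  proof -
    have "cnj (trace (cadj A ** M)) = trace (M ** A)"
      by (simp add: trace_cadj[symmetric] cadj_mult hM)
    also have "\<dots> = trace (A ** M)"
      by (rule trace_mul_sym)
    finally show ?thesis .
  qed
  ultimately have "cnj (trace (cadj A ** M)) + trace (cadj A ** M) = 0"
    by (simp add: H_def matrix_add_rdistrib trace_add)
  then have "Re (cnj (trace (cadj A ** M)) + trace (cadj A ** M)) = 0"
    by simp
  then show ?thesis
    by simp
qed

lemma SLD_exists:
  assumes psd: "psd \<rho>" and herm: "cadj \<rho> = \<rho>" and hM: "cadj M = M"
    and kerM: "\<And>x y. \<rho> *v x = 0 \<Longrightarrow> \<rho> *v y = 0 \<Longrightarrow> cinner x (M *v y) = 0"
  shows "\<exists>L. is_SLD \<rho> M L"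
proof -
  have "A \<bullet> M = 0" if "anticomm \<rho> A = 0" for A
    unfolding inner_as_trace
    by (rule trace_kernel_annihilator[OF herm hM kerM anticomm_eq_0D[OF psd herm that]])
  then have "M \<in> range (anticomm \<rho>)"
    unfolding range_anticomm[OF herm] by (simp add: orthogonal_comp_def orthogonal_def)
  then obtain L0 where L0: "anticomm \<rho> L0 = M" by blast
  define L where "L = L0 + cadj L0"
  have "anticomm \<rho> L = 2 *\<^sub>R M"
    using L0 hM by (simp add: L_def linear_add[OF linear_anticomm] anticomm_cadj[OF herm]
        scaleR_2)
  moreover have "cadj L = L" by (simp add: L_def add.commute)
  ultimately show ?thesis
    unfolding is_SLD_def anticomm_def by auto
qed

lemma SLD_trace_unique:
  assumes psd: "psd \<rho>" and herm: "cadj \<rho> = \<rho>"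
    and L1: "is_SLD \<rho> M L1" and L2: "is_SLD \<rho> M L2"
  shows "trace (\<rho> ** L1 ** L1) = trace (\<rho> ** L2 ** L2)"
proof -
  define D where "D = L1 - L2"
  have "anticomm \<rho> D = 0"
    using L1 L2 unfolding is_SLD_def anticomm_def D_def
    by (simp add: matrix_diff_ldistrib matrix_diff_rdistrib algebra_simps)
  note D = anticomm_eq_0D[OF psd herm this]
  have "\<rho> ** L1 ** L1 = \<rho> ** L2 ** L2 + \<rho> ** L2 ** D + (\<rho> ** D) ** L2 + (\<rho> ** D) ** D"
    by (simp add: D_def matrix_add_ldistrib matrix_add_rdistrib matrix_diff_ldistrib
        matrix_diff_rdistrib matrix_mul_assoc)
  moreover have "trace (\<rho> ** L2 ** D) = trace (D ** \<rho> ** L2)"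
    by (rule trans[OF trace_mult_cycle trace_mult_cycle])
  ultimately show ?thesis
    using D by (simp add: trace_add)
qed

lemma QFI_eq_SLD:
  assumes "psd \<rho>" and "cadj \<rho> = \<rho>" and "is_SLD \<rho> M L"
  shows "QFI \<rho> M = Re (trace (\<rho> ** L ** L))"
  unfolding QFI_def
proof (rule the_equality)
  show "\<exists>L'. is_SLD \<rho> M L' \<and> Re (trace (\<rho> ** L ** L)) = Re (trace (\<rho> ** L' ** L'))"
    using assms(3) by blast
next
  fix f assume "\<exists>L'. is_SLD \<rho> M L' \<and> f = Re (trace (\<rho> ** L' ** L'))"
  then show "f = Re (trace (\<rho> ** L ** L))"
    using SLD_trace_unique[OF assms(1,2) _ assms(3)] by auto
qed

text \<open>Cauchy-Schwarz for the form \<open>(X, Y) \<mapsto> Re tr (\<rho> X Y)\<close>, applied to \<open>L\<close> and \<open>X\<close>, with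
  \<open>Re tr (\<rho> L X) = Re tr (M X)\<close> read off the SLD equation.\<close>

lemma SLD_cauchy_schwarz:
  assumes psd: "psd \<rho>" and L: "is_SLD \<rho> M L" and hX: "cadj X = X"
  shows "(Re (trace (M ** X)))\<^sup>2 \<le> Re (trace (\<rho> ** L ** L)) * Re (trace (\<rho> ** X ** X))"
proof -
  have hL: "cadj L = L" and SLD: "2 *\<^sub>R M = \<rho> ** L + L ** \<rho>"
    using L by (auto simp: is_SLD_def)
  have cross: "trace (L ** \<rho> ** X) + trace (X ** \<rho> ** L) = 2 * trace (M ** X)"
  proof -
    have "trace (X ** \<rho> ** L) = trace (\<rho> ** L ** X)"
      by (rule trace_mult_cycle)
    moreover have "trace ((2 *\<^sub>R M) ** X) = 2 *\<^sub>R trace (M ** X)"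
      by (simp add: scalar_matrix_assoc[symmetric] trace_scaleR)
    moreover have "2 *\<^sub>R trace (M ** X) = 2 * trace (M ** X)"
      by (simp add: scaleR_conv_of_real)
    ultimately show ?thesis
      by (simp add: SLD matrix_add_rdistrib trace_add add.commute)
  qed
  have "0 \<le> Re (trace (\<rho> ** L ** L)) + 2 * Re (trace (M ** X)) * t
      + Re (trace (\<rho> ** X ** X)) * t\<^sup>2" for t :: real
  proof -
    define Y where "Y = L + t *\<^sub>R X"
    have "cadj Y ** \<rho> ** Y = L ** \<rho> ** L + t *\<^sub>R (L ** \<rho> ** X + X ** \<rho> ** L)
        + (t * t) *\<^sub>R (X ** \<rho> ** X)"
      by (simp add: Y_def hL hX matrix_add_ldistrib matrix_add_rdistrib scalar_matrix_assoc
          matrix_scalar_ac algebra_simps)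
    moreover have "trace (L ** \<rho> ** L) = trace (\<rho> ** L ** L)"
      and "trace (X ** \<rho> ** X) = trace (\<rho> ** X ** X)"
      by (rule trace_mult_cycle)+
    ultimately have "Re (trace (cadj Y ** \<rho> ** Y)) = Re (trace (\<rho> ** L ** L))
        + 2 * Re (trace (M ** X)) * t + Re (trace (\<rho> ** X ** X)) * t\<^sup>2"
      by (simp add: trace_add trace_scaleR cross power2_eq_square)
    then show ?thesis
      using psd_trace_sandwich_nonneg[OF psd, of Y] by simp
  qed
  from nonneg_quadratic_discriminant[OF this] show ?thesis .
qed

lemma bounded_linear_cadj: "bounded_linear (cadj :: complex^'n^'n \<Rightarrow> _)"
  by (simp add: linear_conv_bounded_linear[symmetric] linearI)

lemma bounded_linear_Re_quad_form: "bounded_linear (\<lambda>A::complex^'n^'n. Re (quad_form A x))"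
proof -
  have "quad_form (r *\<^sub>R A) x = of_real r * quad_form A x" for r and A :: "complex^'n^'n"
    by (simp add: quad_form_def matrix_vector_scaleR_left scaleR_as_smult cinner_smult_right)
  then have "linear (\<lambda>A::complex^'n^'n. Re (quad_form A x))"
    by (intro linearI) (simp_all add: quad_form_def matrix_vector_mult_add_rdistrib cinner_add_right)
  then show ?thesis by (simp add: linear_conv_bounded_linear)
qed

lemma density_derivative_hermitian:
  assumes dens: "\<And>\<theta>. density (\<rho> \<theta>)" and der: "(\<rho> has_vector_derivative M) (at x)"
  shows "cadj M = M"
proof -
  have "((\<lambda>\<theta>. cadj (\<rho> \<theta>)) has_vector_derivative cadj M) (at x)"
    by (rule bounded_linear.has_vector_derivative[OF bounded_linear_cadj der])
  then have "(\<rho> has_vector_derivative cadj M) (at x)"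
    using density_hermitian[OF dens] by simp
  then show ?thesis using der vector_derivative_unique_at by blast
qed

text \<open>\<open>\<theta> \<mapsto> \<langle>z, \<rho>(\<theta>) z\<rangle>\<close> is nonnegative and vanishes at \<open>x\<close>, so its derivative vanishes there.\<close>

lemma psd_derivative_kernel:
  assumes der: "(\<rho> has_vector_derivative M) (at x)" and psd: "\<And>\<theta>. psd (\<rho> \<theta>)"
    and hM: "cadj M = M" and z: "\<rho> x *v z = 0"
  shows "quad_form M z = 0"
proof -
  have "((\<lambda>\<theta>. Re (quad_form (\<rho> \<theta>) z)) has_vector_derivative Re (quad_form M z)) (at x)"
    by (rule bounded_linear.has_vector_derivative[OF bounded_linear_Re_quad_form der])
  then have D: "((\<lambda>\<theta>. Re (quad_form (\<rho> \<theta>) z)) has_real_derivative Re (quad_form M z)) (at x)"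
    by (simp add: has_real_derivative_iff_has_vector_derivative)
  have "Re (quad_form (\<rho> x) z) = 0" using z by (simp add: quad_form_def cinner_def)
  then have "\<forall>y. \<bar>x - y\<bar> < 1 \<longrightarrow> Re (quad_form (\<rho> x) z) \<le> Re (quad_form (\<rho> y) z)"
    using psd by (simp add: psd_def)
  then have "Re (quad_form M z) = 0" using DERIV_local_min[OF D, of 1] by simp
  then show ?thesis using quad_form_hermitian_real[OF hM] by (simp add: complex_eq_iff)
qed

lemma hermitian_polarization_kernel:
  assumes hM: "cadj M = M"
    and z: "\<And>z. \<rho> *v z = 0 \<Longrightarrow> quad_form M z = 0"
    and x: "\<rho> *v x = 0" and y: "\<rho> *v y = 0"
  shows "cinner x (M *v y) = 0"
proof -
  define w where "w = cinner x (M *v y)"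
  have "cinner y (M *v x) = cinner (M *v y) x"
    using cinner_adjoint[of y M x] hM by simp
  then have yx: "cinner y (M *v x) = cnj w"
    by (simp add: w_def cinner_commute)
  have "c * w + cnj c * cnj w = 0" for c
  proof -
    have "\<rho> *v (x + c *s y) = 0"
      using x y by (simp add: matrix_vector_right_distrib vector_scalar_commute)
    then have "quad_form M (x + c *s y) = 0" by (rule z)
    then show ?thesis using z[OF x] z[OF y] by (simp add: quad_form_expand yx w_def)
  qed
  from this[of 1] this[of \<i>] show ?thesis
    unfolding w_def by (simp add: complex_eq_iff)
qed

lemma SLD_exists_derivative:
  assumes dens: "\<And>\<theta>. density (\<rho> \<theta>)" and der: "(\<rho> has_vector_derivative M) (at x)"
  shows "\<exists>L. is_SLD (\<rho> x) M L"
proof -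
  have hM: "cadj M = M" by (rule density_derivative_hermitian[OF dens der])
  have kernel: "quad_form M z = 0" if "\<rho> x *v z = 0" for z
    using psd_derivative_kernel[OF der density_psd[OF dens] hM that] .
  have "cinner a (M *v b) = 0" if "\<rho> x *v a = 0" "\<rho> x *v b = 0" for a b
    using hermitian_polarization_kernel[OF hM kernel that] .
  then show ?thesis
    by (rule SLD_exists[OF density_psd[OF dens] density_hermitian[OF dens] hM])
qed

lemma QFI_eq_SLD_derivative:
  assumes dens: "\<And>\<theta>. density (\<rho> \<theta>)" and der: "(\<rho> has_vector_derivative M) (at x)"
  obtains L where "is_SLD (\<rho> x) M L" and "QFI (\<rho> x) M = Re (trace (\<rho> x ** L ** L))"
proof -
  obtain L where L: "is_SLD (\<rho> x) M L"
    using SLD_exists_derivative[OF dens der] by blast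
  then show ?thesis
    using QFI_eq_SLD[OF density_psd[OF dens] density_hermitian[OF dens] L] that by blast
qed

lemma QFI_nonneg:
  assumes dens: "\<And>\<theta>. density (\<rho> \<theta>)" and der: "(\<rho> has_vector_derivative M) (at x)"
  shows "0 \<le> QFI (\<rho> x) M"
proof -
  obtain L where L: "is_SLD (\<rho> x) M L" and QFI: "QFI (\<rho> x) M = Re (trace (\<rho> x ** L ** L))"
    by (rule QFI_eq_SLD_derivative[OF dens der])
  have "trace (\<rho> x ** L ** L) = trace (cadj L ** \<rho> x ** L)"
    using L trace_mult_cycle[of L "\<rho> x" L] by (simp add: is_SLD_def)
  then show ?thesis
    using psd_trace_sandwich_nonneg[OF density_psd[OF dens]] QFI by simp
qed

lemma QFI_hermitian_bound:
  assumes dens: "\<And>\<theta>. density (\<rho> \<theta>)" and der: "(\<rho> has_vector_derivative M) (at x)"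
    and hX: "cadj X = X"
  shows "(Re (trace (M ** X)))\<^sup>2 \<le> QFI (\<rho> x) M * entry_sum (X ** X)"
proof -
  obtain L where L: "is_SLD (\<rho> x) M L" and QFI: "QFI (\<rho> x) M = Re (trace (\<rho> x ** L ** L))"
    by (rule QFI_eq_SLD_derivative[OF dens der])
  have "Re (trace (\<rho> x ** (X ** X))) \<le> entry_sum (X ** X)"
    by (rule density_trace_bound[OF dens])
  then have "Re (trace (\<rho> x ** X ** X)) \<le> entry_sum (X ** X)"
    by (simp add: matrix_mul_assoc)
  then have "QFI (\<rho> x) M * Re (trace (\<rho> x ** X ** X)) \<le> QFI (\<rho> x) M * entry_sum (X ** X)"
    using QFI_nonneg[OF dens der] by (rule mult_left_mono)
  then show ?thesis
    using SLD_cauchy_schwarz[OF density_psd[OF dens] L hX] QFI by simp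
qed

text \<open>Split \<open>tr (G M)\<close> into \<open>Re tr (M X\<^sub>1)/2\<close> and \<open>- Re tr (M X\<^sub>2)/2\<close> with the Hermitian matrices
  \<open>X\<^sub>1 = G + G\<^sup>\<dagger>\<close> and \<open>X\<^sub>2 = \<i> (G - G\<^sup>\<dagger>)\<close>.\<close>

lemma QFI_ge_trace_square:
  fixes G :: "complex^'n^'n"
  obtains C where "C > 0"
    and "\<And>\<rho> M x. (\<And>\<theta>. density (\<rho> \<theta>)) \<Longrightarrow> (\<rho> has_vector_derivative M) (at x) \<Longrightarrow>
           (cmod (trace (G ** M)))\<^sup>2 \<le> C * QFI (\<rho> x) M"
proof
  define X1 where "X1 = G + cadj G"
  define X2 where "X2 = cscale \<i> (G - cadj G)"
  have hX: "cadj X1 = X1" "cadj X2 = X2"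
    by (simp_all add: X1_def X2_def add.commute cscale_def cadj_def vec_eq_iff algebra_simps)
  define C where "C = (entry_sum (X1 ** X1) + entry_sum (X2 ** X2)) / 4 + 1"
  have "entry_sum A \<ge> 0" for A :: "complex^'n^'n"
    by (simp add: entry_sum_def sum_nonneg)
  then show "C > 0"
    by (simp add: C_def add_nonneg_pos)
  fix \<rho> :: "real \<Rightarrow> complex^'n^'n" and M x
  assume dens: "\<And>\<theta>. density (\<rho> \<theta>)" and der: "(\<rho> has_vector_derivative M) (at x)"
  have hM: "cadj M = M" by (rule density_derivative_hermitian[OF dens der])
  define z where "z = trace (G ** M)"
  have "trace (M ** G) = z" unfolding z_def by (rule trace_mul_sym)
  moreover have "trace (M ** cadj G) = cnj z"
    by (simp add: z_def trace_cadj[symmetric] cadj_mult hM)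
  ultimately have "Re (trace (M ** X1)) = 2 * Re z" "Re (trace (M ** X2)) = - 2 * Im z"
    by (simp_all add: X1_def X2_def matrix_add_ldistrib matrix_diff_ldistrib cscale_mult_right
        trace_cscale trace_add trace_sub)
  then have "4 * (cmod z)\<^sup>2 = (Re (trace (M ** X1)))\<^sup>2 + (Re (trace (M ** X2)))\<^sup>2"
    using cmod_power2[of z] by (simp add: power2_eq_square)
  also have "\<dots> \<le> QFI (\<rho> x) M * (entry_sum (X1 ** X1) + entry_sum (X2 ** X2))"
    using QFI_hermitian_bound[OF dens der hX(1)] QFI_hermitian_bound[OF dens der hX(2)]
    by (simp add: distrib_left)
  finally show "(cmod (trace (G ** M)))\<^sup>2 \<le> C * QFI (\<rho> x) M"
    using QFI_nonneg[OF dens der] by (simp add: C_def z_def field_simps)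
qed

section \<open>Iterated channels\<close>

primrec matpow :: "complex^'m^'m \<Rightarrow> nat \<Rightarrow> complex^'m^'m" where
  "matpow T 0 = mat 1"
| "matpow T (Suc k) = T ** matpow T k"

lemma matpow_Suc_right: "matpow T (Suc k) = matpow T k ** T"
  by (induction k) (simp_all add: matrix_mul_assoc)

lemma vecz_sum: "vecz (sum f S) = (\<Sum>x\<in>S. vecz (f x))"
  by (induction S rule: infinite_finite_induct) (simp_all add: vecz_def vec_eq_iff)

lemma vecz_sandwich: "vecz (K ** \<rho> ** cadj K) = kron K (cconj K) *v vecz \<rho>"
proof -
  have "vecz (K ** \<rho> ** cadj K) $ (a, b) = (kron K (cconj K) *v vecz \<rho>) $ (a, b)" for a b
  proof -
    have "vecz (K ** \<rho> ** cadj K) $ (a, b) = (\<Sum>d\<in>UNIV. \<Sum>c\<in>UNIV. K$a$c * \<rho>$c$d * cnj (K$b$d))"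
      by (simp add: vecz_def matrix_matrix_mult_def cadj_def sum_distrib_right)
    also have "\<dots> = (\<Sum>c\<in>UNIV. \<Sum>d\<in>UNIV. K$a$c * \<rho>$c$d * cnj (K$b$d))"
      by (rule sum.swap)
    also have "\<dots> = (kron K (cconj K) *v vecz \<rho>) $ (a, b)"
      by (simp add: matrix_vector_mult_def kron_def cconj_def vecz_def sum_UNIV_pairs ac_simps)
    finally show ?thesis .
  qed
  then show ?thesis by (simp add: vec_eq_iff)
qed

lemma vecz_channel: "vecz (channel K \<rho>) = liouville K *v vecz \<rho>"
  by (simp add: channel_def liouville_def vecz_sum vecz_sandwich matrix_vector_sum_rdistrib)

lemma vecz_channel_iter: "vecz ((channel K ^^ N) \<rho>) = matpow (liouville K) N *v vecz \<rho>"
  by (induction N) (simp_all add: vecz_channel flip: matrix_vector_mul_assoc)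

lemma density_channel:
  assumes tp: "trace_preserving K" and d: "density \<rho>"
  shows "density (channel K \<rho>)"
proof -
  have herm: "cadj \<rho> = \<rho>" using d by (simp add: density_def)
  have "cadj (K i ** \<rho> ** cadj (K i)) = K i ** \<rho> ** cadj (K i)" for i
    by (simp add: cadj_mult herm matrix_mul_assoc)
  then have "cadj (channel K \<rho>) = channel K \<rho>"
    by (simp add: channel_def cadj_sum)
  moreover have "0 \<le> Re (quad_form (channel K \<rho>) x)" for x
    using density_psd[OF d]
    by (simp add: channel_def quad_form_sum quad_form_sandwich Re_sum sum_nonneg psd_def)
  moreover have "trace (channel K \<rho>) = 1"
  proof -
    have "trace (K i ** \<rho> ** cadj (K i)) = trace (\<rho> ** (cadj (K i) ** K i))" for i
      by (rule trans[OF trans[OF trace_mult_cycle trace_mult_cycle] trace_mul_sym])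
    then have "trace (channel K \<rho>) = trace (\<rho> ** (\<Sum>i\<in>UNIV. cadj (K i) ** K i))"
      by (simp add: channel_def trace_sum matrix_sum_ldistrib)
    then show ?thesis
      using tp d by (simp add: trace_preserving_def density_def)
  qed
  ultimately show ?thesis
    by (simp add: density_def quad_form_def cinner_def)
qed

lemma density_channel_iter:
  "trace_preserving K \<Longrightarrow> density \<rho> \<Longrightarrow> density ((channel K ^^ N) \<rho>)"
  by (induction N) (simp_all add: density_channel)

text \<open>Densities span all matrices and the iterates of a channel stay densities, whose entries
  are bounded by \<open>1\<close>.\<close>

lemma liouville_power_bounded:
  fixes K :: "'k::finite \<Rightarrow> complex^'n^'n"
  assumes tp: "trace_preserving K"
  shows "\<exists>B. \<forall>N. norm (matpow (liouville K) N *v v) \<le> B"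
proof (induction v rule: vecz_density_induct)
  case zero
  then show ?case by auto
next
  case (add x y)
  then obtain Bx By where "\<forall>N. norm (matpow (liouville K) N *v x) \<le> Bx"
    and "\<forall>N. norm (matpow (liouville K) N *v y) \<le> By" by blast
  then have "norm (matpow (liouville K) N *v (x + y)) \<le> Bx + By" for N
    by (simp add: matrix_vector_right_distrib) (meson add_mono norm_triangle_le)
  then show ?case by blast
next
  case (smult c x)
  then obtain Bx where "\<forall>N. norm (matpow (liouville K) N *v x) \<le> Bx" by blast
  then have "norm (matpow (liouville K) N *v (c *s x)) \<le> cmod c * Bx" for N
    by (simp add: vector_scalar_commute norm_smult mult_left_mono)
  then show ?case by blast
next
  case (density \<rho>)
  have "norm (matpow (liouville K) N *v vecz \<rho>) \<le> real CARD('n \<times> 'n)" for N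
    using norm_vecz_density_le[OF density_channel_iter[OF tp density, of N]]
    by (simp add: vecz_channel_iter)
  then show ?case by blast
qed

primrec matpow_deriv :: "complex^'m^'m \<Rightarrow> complex^'m^'m \<Rightarrow> nat \<Rightarrow> complex^'m^'m" where
  "matpow_deriv T T' 0 = 0"
| "matpow_deriv T T' (Suc k) = T' ** matpow T k + T ** matpow_deriv T T' k"

lemma bounded_bilinear_matrix_mult:
  "bounded_bilinear (\<lambda>(A::complex^'m^'m) (B::complex^'m^'m). A ** B)"
  by (subst bilinear_conv_bounded_bilinear[symmetric])
     (auto simp: bilinear_def intro!: linearI simp: matrix_add_ldistrib matrix_add_rdistrib
      scalar_matrix_assoc matrix_scalar_ac)

lemma bounded_linear_matrix_vector_mult_left:
  "bounded_linear (\<lambda>A :: complex^'m^'k. A *v v)"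
  by (auto simp: linear_conv_bounded_linear[symmetric] intro!: linearI
      simp: matrix_vector_mult_add_rdistrib matrix_vector_scaleR_left)

lemma bounded_linear_vecz: "bounded_linear (vecz :: complex^'n^'n \<Rightarrow> _)"
  and bounded_linear_unvecz: "bounded_linear (unvecz :: _ \<Rightarrow> complex^'n^'n)"
  by (auto simp: linear_conv_bounded_linear[symmetric] vecz_def unvecz_def vec_eq_iff
      intro!: linearI)

lemma has_vector_derivative_matpow:
  assumes "(T has_vector_derivative T') (at x)"
  shows "((\<lambda>\<theta>. matpow (T \<theta>) N) has_vector_derivative matpow_deriv (T x) T' N) (at x)"
proof (induction N)
  case 0
  then show ?case by simp
next
  case (Suc N)
  show ?case
    using bounded_bilinear.has_vector_derivative[OF bounded_bilinear_matrix_mult assms Suc]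
    by (simp add: add.commute)
qed

lemma has_vector_derivative_channel_iter:
  assumes "((\<lambda>\<theta>. liouville (K \<theta>)) has_vector_derivative T') (at x)"
  shows "((\<lambda>\<theta>. (channel (K \<theta>) ^^ N) \<rho>) has_vector_derivative
           unvecz (matpow_deriv (liouville (K x)) T' N *v vecz \<rho>)) (at x)"
proof -
  have "(\<lambda>\<theta>. (channel (K \<theta>) ^^ N) \<rho>) = (\<lambda>\<theta>. unvecz (matpow (liouville (K \<theta>)) N *v vecz \<rho>))"
    by (simp flip: vecz_channel_iter)
  then show ?thesis
    using bounded_linear.has_vector_derivative[OF bounded_linear_unvecz
        bounded_linear.has_vector_derivative[OF bounded_linear_matrix_vector_mult_left
          has_vector_derivative_matpow[OF assms]]]
    by simp
qed

lemma eigen_equation_derivative: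
  fixes T :: "real \<Rightarrow> complex^'m^'m"
  assumes T: "(T has_vector_derivative T') (at x)" and r: "(r has_vector_derivative r') (at x)"
    and l: "(l has_vector_derivative l') (at x)"
    and U: "open U" "x \<in> U" and eig: "\<And>\<theta>. \<theta> \<in> U \<Longrightarrow> T \<theta> *v r \<theta> = l \<theta> *s r \<theta>"
  shows "T' *v r x + T x *v r' = l' *s r x + l x *s r'"
proof -
  have bb_mv: "bounded_bilinear (\<lambda>(A::complex^'m^'m) v. A *v v)"
    by (subst bilinear_conv_bounded_bilinear[symmetric])
       (auto simp: bilinear_def intro!: linearI simp: matrix_vector_mult_add_rdistrib
        matrix_vector_right_distrib matrix_vector_scaleR_left matrix_vector_scaleR_right)
  have bb_sm: "bounded_bilinear (\<lambda>(c::complex) (v::complex^'m). c *s v)"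
    by (subst bilinear_conv_bounded_bilinear[symmetric])
       (auto simp: bilinear_def intro!: linearI simp: vec_eq_iff algebra_simps)
  have "((\<lambda>\<theta>. l \<theta> *s r \<theta>) has_vector_derivative T x *v r' + T' *v r x) (at x)"
    using bounded_bilinear.has_vector_derivative[OF bb_mv T r]
    by (rule has_vector_derivative_transform_within_open[OF _ U]) (simp add: eig)
  moreover have "((\<lambda>\<theta>. l \<theta> *s r \<theta>) has_vector_derivative l x *s r' + l' *s r x) (at x)"
    by (rule bounded_bilinear.has_vector_derivative[OF bb_sm l r])
  ultimately show ?thesis
    by (metis vector_derivative_unique_at add.commute)
qed

section \<open>Peripheral eigenvalues of power-bounded matrices\<close>

locale power_bounded_eigen =
  fixes T0 :: "complex^'m::finite^'m" and lm :: complex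
  assumes power_bounded: "\<And>v. \<exists>B. \<forall>N. norm (matpow T0 N *v v) \<le> B"
    and unimodular: "cmod lm = 1"
begin

definition shift :: "complex^'m \<Rightarrow> complex^'m" where
  "shift v = T0 *v v - lm *s v"

lemma shift_add: "shift (x + y) = shift x + shift y"
  and shift_diff: "shift (x - y) = shift x - shift y"
  and shift_smult: "shift (c *s x) = c *s shift x"
  by (simp_all add: shift_def matrix_vector_right_distrib matrix_vector_mult_diff_distrib
      vector_scalar_commute vec_eq_iff algebra_simps)

lemma linear_shift: "linear shift"
  by (rule linearI) (simp_all add: shift_add scaleR_as_smult shift_smult)

lemma matpow_kernel: "shift a = 0 \<Longrightarrow> matpow T0 N *v a = lm ^ N *s a"
  by (induction N)
     (simp_all add: shift_def vector_scalar_commute vector_smult_assoc mult.commute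
      flip: matrix_vector_mult_diff_distrib matrix_vector_mul_assoc)

text \<open>No Jordan block for a unimodular eigenvalue: if \<open>v = shift u \<noteq> 0\<close> were an eigenvector, then
  \<open>T0\<^sup>N u = lm\<^sup>N (u + (N/lm) v)\<close> would grow linearly in \<open>N\<close>.\<close>

lemma kernel_inter_range: "shift v = 0 \<Longrightarrow> v = shift u \<Longrightarrow> v = 0"
proof -
  assume v: "shift v = 0" "v = shift u"
  have lm0: "lm \<noteq> 0" using unimodular by auto
  have Tv: "T0 *v v = lm *s v" and Tu: "T0 *v u = lm *s u + v"
    using v by (simp_all add: shift_def)
  have iter: "matpow T0 N *v u = lm^N *s (u + (of_nat N / lm) *s v)" for N
  proof (induction N)
    case 0
    then show ?case by (simp add: vec_eq_iff)
  next
    case (Suc N)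
    have "matpow T0 (Suc N) *v u = lm^N *s (lm *s u + v + (of_nat N / lm) *s (lm *s v))"
      by (simp add: Suc vector_scalar_commute vector_add_ldistrib matrix_vector_right_distrib
          Tu Tv flip: matrix_vector_mul_assoc)
    also have "\<dots> = lm^(Suc N) *s (u + (of_nat (Suc N) / lm) *s v)"
      using lm0 by (simp add: vec_eq_iff field_simps)
    finally show ?case .
  qed
  obtain B where B: "\<And>N. norm (matpow T0 N *v u) \<le> B"
    using power_bounded by blast
  have "real N * norm v \<le> B + norm u" for N
  proof -
    have "norm (matpow T0 N *v u) = norm (u + (of_nat N / lm) *s v)"
      unfolding iter norm_smult using unimodular by (simp add: norm_power)
    then have "norm (u + (of_nat N / lm) *s v) \<le> B"
      using B[of N] by simp
    moreover have "norm ((of_nat N / lm) *s v) = real N * norm v"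
      using unimodular by (simp add: norm_smult norm_divide)
    moreover have "norm ((of_nat N / lm) *s v) \<le> norm (u + (of_nat N / lm) *s v) + norm u"
      by (metis add_diff_cancel_left' norm_triangle_ineq4 add.commute)
    ultimately show ?thesis by linarith
  qed
  then show "v = 0"
    by (metis add_pos_nonneg ex_less_of_nat_mult norm_ge_zero not_le zero_less_norm_iff)
qed

lemma kernel_range_decomposition: "\<exists>a u. v = a + shift u \<and> shift a = 0"
proof -
  have "shift (shift u) = 0 \<Longrightarrow> shift u = 0" for u
    using kernel_inter_range by blast
  then have "shift v \<in> shift ` range shift"
    using linear_image_range_eq_range[OF linear_shift] by blast
  then obtain u where "shift v = shift (shift u)" by blast
  then have "shift (v - shift u) = 0" by (simp add: shift_diff)
  then show ?thesis by (metis diff_add_cancel)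
qed

end

locale peripheral_basis = power_bounded_eigen T0 lm
  for T0 :: "complex^'m::finite^'m" and lm +
  fixes r :: "'p::finite \<Rightarrow> complex^'m" and lam0 :: "'p \<Rightarrow> complex" and j :: 'p
  assumes eigen: "\<And>i. T0 *v r i = lam0 i *s r i"
    and independent: "\<And>c. (\<Sum>i\<in>UNIV. c i *s r i) = 0 \<Longrightarrow> \<forall>i. c i = 0"
    and spanning: "\<And>v. T0 *v v = lm *s v \<Longrightarrow> \<exists>c. v = (\<Sum>i\<in>UNIV. c i *s r i)"
    and eigenvalue_j: "lam0 j = lm"
begin

lemma kernel_coeffs:
  assumes "shift a = 0"
  obtains c where "a = (\<Sum>i\<in>UNIV. c i *s r i)" and "\<And>i. c i \<noteq> 0 \<Longrightarrow> lam0 i = lm"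
proof -
  obtain c where c: "a = (\<Sum>i\<in>UNIV. c i *s r i)"
    using spanning assms by (auto simp: shift_def)
  have shift_r: "shift (r i) = (lam0 i - lm) *s r i" for i
    by (simp add: shift_def eigen vector_sub_rdistrib)
  have "shift a = (\<Sum>i\<in>UNIV. (c i * (lam0 i - lm)) *s r i)"
    by (simp only: c linear_sum[OF linear_shift] shift_smult shift_r vector_smult_assoc)
  then have "(\<Sum>i\<in>UNIV. (c i * (lam0 i - lm)) *s r i) = 0"
    using assms by simp
  then have "c i * (lam0 i - lm) = 0" for i
    using independent[of "\<lambda>i. c i * (lam0 i - lm)"] by blast
  then show ?thesis using that c by auto
qed

lemma coeffs_unique: "(\<Sum>i\<in>UNIV. c i *s r i) = (\<Sum>i\<in>UNIV. c' i *s r i) \<Longrightarrow> c = c'"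
proof -
  assume "(\<Sum>i\<in>UNIV. c i *s r i) = (\<Sum>i\<in>UNIV. c' i *s r i)"
  then have "(\<Sum>i\<in>UNIV. (c i - c' i) *s r i) = 0"
    by (simp add: vector_sub_rdistrib sum_subtractf)
  then show "c = c'" using independent by fastforce
qed

definition ell :: "complex^'m \<Rightarrow> complex" where
  "ell v = (THE z. \<exists>a u c. v = a + shift u \<and> shift a = 0 \<and> a = (\<Sum>i\<in>UNIV. c i *s r i) \<and> z = c j)"

lemma ell_eq:
  assumes "v = a + shift u" "shift a = 0" "a = (\<Sum>i\<in>UNIV. c i *s r i)"
  shows "ell v = c j"
  unfolding ell_def
proof (rule the_equality)
  show "\<exists>a u c'. v = a + shift u \<and> shift a = 0 \<and> a = (\<Sum>i\<in>UNIV. c' i *s r i) \<and> c j = c' j"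
    using assms by blast
next
  fix z
  assume "\<exists>a' u' c'. v = a' + shift u' \<and> shift a' = 0 \<and> a' = (\<Sum>i\<in>UNIV. c' i *s r i) \<and> z = c' j"
  then obtain a' u' c' where a': "v = a' + shift u'" "shift a' = 0"
    "a' = (\<Sum>i\<in>UNIV. c' i *s r i)" "z = c' j"
    by blast
  have "a - a' = shift (u' - u)" using a'(1) assms(1) by (simp add: shift_diff algebra_simps)
  moreover have "shift (a - a') = 0" using a'(2) assms(2) by (simp add: shift_diff)
  ultimately have "a = a'" using kernel_inter_range by fastforce
  then have "(\<Sum>i\<in>UNIV. c i *s r i) = (\<Sum>i\<in>UNIV. c' i *s r i)"
    using assms(3) a'(3) by simp
  then have "c = c'" by (rule coeffs_unique)
  then show "z = c j" using a'(4) by simp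
qed

lemma ell_decomposition:
  obtains a u c where "v = a + shift u" "shift a = 0" "a = (\<Sum>i\<in>UNIV. c i *s r i)"
proof -
  obtain a u where "v = a + shift u" "shift a = 0"
    using kernel_range_decomposition by blast
  moreover obtain c where "a = (\<Sum>i\<in>UNIV. c i *s r i)"
    using kernel_coeffs[OF \<open>shift a = 0\<close>] by blast
  ultimately show ?thesis using that by blast
qed

lemma ell_add: "ell (x + y) = ell x + ell y"
proof -
  obtain a u c where x: "x = a + shift u" "shift a = 0" "a = (\<Sum>i\<in>UNIV. c i *s r i)"
    by (rule ell_decomposition)
  obtain b w d where y: "y = b + shift w" "shift b = 0" "b = (\<Sum>i\<in>UNIV. d i *s r i)"
    by (rule ell_decomposition)
  have "x + y = (a + b) + shift (u + w)" using x y by (simp add: shift_add algebra_simps)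
  moreover have "shift (a + b) = 0" using x y by (simp add: shift_add)
  moreover have "a + b = (\<Sum>i\<in>UNIV. (c i + d i) *s r i)"
    using x y by (simp add: vector_sadd_rdistrib sum.distrib)
  ultimately have "ell (x + y) = c j + d j" by (rule ell_eq)
  then show ?thesis using ell_eq[OF x] ell_eq[OF y] by simp
qed

lemma ell_smult: "ell (z *s x) = z * ell x"
proof -
  obtain a u c where x: "x = a + shift u" "shift a = 0" "a = (\<Sum>i\<in>UNIV. c i *s r i)"
    by (rule ell_decomposition)
  have "z *s x = z *s a + shift (z *s u)" using x by (simp add: shift_smult vector_add_ldistrib)
  moreover have "shift (z *s a) = 0" using x(2) by (simp add: shift_smult)
  moreover have "z *s a = (\<Sum>i\<in>UNIV. (z * c i) *s r i)"
    using x by (simp add: vec_eq_iff sum_distrib_left mult.assoc)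
  ultimately have "ell (z *s x) = z * c j" by (rule ell_eq)
  then show ?thesis using ell_eq[OF x] by simp
qed

lemma ell_diff: "ell (x - y) = ell x - ell y"
  using ell_add[of "x - y" y] by simp

lemma ell_zero [simp]: "ell 0 = 0"
  using ell_smult[of 0 0] by simp

lemma ell_sum: "ell (sum g S) = (\<Sum>x\<in>S. ell (g x))"
  by (induction S rule: infinite_finite_induct) (simp_all add: ell_add)

lemma ell_shift: "ell (shift u) = 0"
  using ell_eq[of "shift u" 0 u "\<lambda>i. 0"] by (simp add: shift_def vec_eq_iff)

lemma ell_mult: "ell (T0 *v v) = lm * ell v"
proof -
  have "T0 *v v = lm *s v + shift v" by (simp add: shift_def)
  then show ?thesis by (simp add: ell_add ell_smult ell_shift)
qed

lemma ell_kernel: "shift a = 0 \<Longrightarrow> a = (\<Sum>i\<in>UNIV. c i *s r i) \<Longrightarrow> ell a = c j"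
  using ell_eq[of a a 0 c] by (simp add: shift_def vec_eq_iff)

lemma ell_eigenvector: "lam0 i = lm \<Longrightarrow> ell (r i) = (if i = j then 1 else 0)"
proof -
  assume "lam0 i = lm"
  then have "shift (r i) = 0" by (simp add: shift_def eigen)
  moreover have "(if k = i then 1 else 0) *s r k = (if k = i then r i else 0)" for k
    by simp
  then have "r i = (\<Sum>k\<in>UNIV. (if k = i then 1 else 0) *s r k)"
    by simp
  ultimately show ?thesis using ell_kernel by auto
qed

lemma bounded_linear_ell: "bounded_linear ell"
  by (simp add: linear_conv_bounded_linear[symmetric] ell_add ell_smult scaleR_as_smult
      linearI scaleR_conv_of_real)

end

locale peripheral_derivative = peripheral_basis T0 lm r lam0 j
  for T0 :: "complex^'m::finite^'m" and lm r and lam0 :: "'p::finite \<Rightarrow> complex" and j +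
  fixes T1 :: "complex^'m^'m" and rd :: "'p \<Rightarrow> complex^'m" and lamd :: "'p \<Rightarrow> complex"
  assumes eigen_derivative: "\<And>i. T1 *v r i + T0 *v rd i = lamd i *s r i + lam0 i *s rd i"
begin

lemma ell_derivative_eigenvector:
  assumes "lam0 i = lm"
  shows "ell (T1 *v r i) = (if i = j then lamd i else 0)"
proof -
  have "T1 *v r i = lamd i *s r i + lam0 i *s rd i - T0 *v rd i"
    using eigen_derivative[of i] by (simp add: algebra_simps)
  then have "ell (T1 *v r i) = lamd i * ell (r i)"
    using assms by (simp add: ell_add ell_diff ell_smult ell_mult)
  then show ?thesis using ell_eigenvector[OF assms] by simp
qed

lemma ell_derivative_kernel:
  assumes "shift a = 0"
  shows "ell (T1 *v a) = lamd j * ell a"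
proof -
  obtain c where c: "a = (\<Sum>i\<in>UNIV. c i *s r i)" and lam: "\<And>i. c i \<noteq> 0 \<Longrightarrow> lam0 i = lm"
    using kernel_coeffs[OF assms] by blast
  have "c i * ell (T1 *v r i) = (if i = j then c j * lamd j else 0)" for i
    using lam[of i] ell_derivative_eigenvector[of i] by (cases "c i = 0") auto
  then have "ell (T1 *v a) = c j * lamd j"
    unfolding c by (simp add: matrix_vector_sum_ldistrib vector_scalar_commute ell_sum ell_smult)
  then show ?thesis using ell_kernel[OF assms c] by simp
qed

lemma ell_matpow_deriv_kernel:
  assumes "shift a = 0"
  shows "ell (matpow_deriv T0 T1 N *v a) = of_nat N * lm^N * (lamd j * ell a) / lm"
proof (induction N)
  case 0
  then show ?case by simp
next
  case (Suc N)
  have lm0: "lm \<noteq> 0" using unimodular by auto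
  have "ell (matpow_deriv T0 T1 (Suc N) *v a) = lm^N * (lamd j * ell a) + lm * ell (matpow_deriv T0 T1 N *v a)"
    by (simp add: matrix_vector_mult_add_rdistrib matpow_kernel[OF assms] ell_add ell_mult
        vector_scalar_commute ell_smult ell_derivative_kernel[OF assms] flip: matrix_vector_mul_assoc)
  also have "\<dots> = of_nat (Suc N) * lm^(Suc N) * (lamd j * ell a) / lm"
    using lm0 by (simp add: Suc field_simps)
  finally show ?case .
qed

lemma ell_matpow_deriv_shift:
  "ell (matpow_deriv T0 T1 N *v shift u) = ell (T1 *v (matpow T0 N *v u)) - lm^N * ell (T1 *v u)"
proof (induction N)
  case 0
  then show ?case by (simp add: ell_shift)
next
  case (Suc N)
  have "matpow T0 N *v (T0 *v u) = matpow T0 (Suc N) *v u"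
    by (simp only: matpow_Suc_right matrix_vector_mul_assoc)
  then have "matpow_deriv T0 T1 (Suc N) *v shift u =
      T1 *v (matpow T0 (Suc N) *v u) - lm *s (T1 *v (matpow T0 N *v u))
      + T0 *v (matpow_deriv T0 T1 N *v shift u)"
    by (simp add: shift_def matrix_vector_mult_add_rdistrib matrix_vector_mult_diff_distrib
        vector_scalar_commute del: matpow.simps flip: matrix_vector_mul_assoc)
  then have "ell (matpow_deriv T0 T1 (Suc N) *v shift u) = ell (T1 *v (matpow T0 (Suc N) *v u))
      - lm * ell (T1 *v (matpow T0 N *v u)) + lm * ell (matpow_deriv T0 T1 N *v shift u)"
    by (simp only: ell_add ell_diff ell_smult ell_mult)
  then show ?case
    by (simp add: Suc algebra_simps del: matpow.simps matpow_deriv.simps)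
qed

text \<open>The kernel part of \<open>v\<close> produces the term linear in \<open>N\<close>; the range part stays bounded since
  the powers of \<open>T0\<close> are.\<close>

lemma ell_matpow_deriv_asymptotics:
  "\<exists>C. \<forall>N. cmod (ell (matpow_deriv T0 T1 N *v v) - of_nat N * lm^N * (lamd j * ell v) / lm) \<le> C"
proof -
  obtain a u where v: "v = a + shift u" and a: "shift a = 0"
    using kernel_range_decomposition by blast
  have ell_v: "ell v = ell a" using v by (simp add: ell_add ell_shift)
  define g where "g k = ell (T1 *v (matpow T0 k *v u))" for k
  have eq: "ell (matpow_deriv T0 T1 N *v v) - of_nat N * lm^N * (lamd j * ell v) / lm
      = g N - lm^N * g 0" for N
    using ell_matpow_deriv_kernel[OF a] ell_matpow_deriv_shift[of N u] ell_v
    by (simp add: v matrix_vector_right_distrib ell_add g_def)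
  obtain K where K: "K > 0" "\<And>w. cmod (ell (T1 *v w)) \<le> norm w * K"
    using bounded_linear.pos_bounded[OF bounded_linear_compose[OF bounded_linear_ell
          matrix_vector_mul_bounded_linear]] by auto
  obtain B where B: "\<And>N. norm (matpow T0 N *v u) \<le> B"
    using power_bounded by blast
  have g_bound: "cmod (g N) \<le> B * K" for N
    using K(2)[of "matpow T0 N *v u"] mult_right_mono[OF B[of N] less_imp_le[OF K(1)]]
    unfolding g_def by linarith
  have "cmod (g N - lm^N * g 0) \<le> 2 * (B * K)" for N
  proof -
    have "cmod (g N - lm^N * g 0) \<le> cmod (g N) + cmod (lm^N * g 0)"
      by (rule norm_triangle_ineq4)
    also have "cmod (lm^N * g 0) = cmod (g 0)"
      using unimodular by (simp add: norm_mult norm_power)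
    finally show ?thesis using g_bound[of N] g_bound[of 0] by simp
  qed
  then show ?thesis
    unfolding eq by blast
qed

lemma ell_matpow_deriv_linear_growth:
  "\<exists>C. \<forall>N. real N * cmod (lamd j * ell v) - C \<le> cmod (ell (matpow_deriv T0 T1 N *v v))"
proof -
  obtain C where C: "\<And>N. cmod (ell (matpow_deriv T0 T1 N *v v) - of_nat N * lm^N * (lamd j * ell v) / lm) \<le> C"
    using ell_matpow_deriv_asymptotics by blast
  have "cmod (of_nat N * lm^N * (lamd j * ell v) / lm) = real N * cmod (lamd j * ell v)" for N
    using unimodular by (simp add: norm_mult norm_divide norm_power)
  then have "real N * cmod (lamd j * ell v) - C \<le> cmod (ell (matpow_deriv T0 T1 N *v v))" for N
    using C[of N] norm_triangle_ineq3[of "of_nat N * lm^N * (lamd j * ell v) / lm"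
        "ell (matpow_deriv T0 T1 N *v v)"] by (simp add: norm_minus_commute)
  then show ?thesis by blast
qed

end

section \<open>Heisenberg scaling\<close>

lemma exists_density_not_annihilated:
  fixes f :: "complex^('n::finite \<times> 'n) \<Rightarrow> complex"
  assumes add: "\<And>x y. f (x + y) = f x + f y" and smult: "\<And>c x. f (c *s x) = c * f x"
    and "f w \<noteq> 0"
  obtains \<rho> where "density \<rho>" and "f (vecz \<rho>) \<noteq> 0"
proof -
  have "f w = 0" if "\<And>\<rho>. density \<rho> \<Longrightarrow> f (vecz \<rho>) = 0"
  proof (induction w rule: vecz_density_induct)
    case zero
    then show ?case using smult[of 0 0] by simp
  qed (simp_all add: add smult that)
  then show ?thesis using assms(3) that by blast
qed

lemma functional_as_trace:
  fixes f :: "complex^('n::finite \<times> 'n) \<Rightarrow> complex"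
  assumes add: "\<And>x y. f (x + y) = f x + f y" and smult: "\<And>c x. f (c *s x) = c * f x"
  obtains G :: "complex^'n^'n" where "\<And>M. f (vecz M) = trace (G ** M)"
proof
  have sum: "f (sum g S) = (\<Sum>x\<in>S. f (g x))" for g and S :: "'x set"
    using smult[of 0 0] by (induction S rule: infinite_finite_induct) (simp_all add: add)
  fix M :: "complex^'n^'n"
  have "f (vecz M) = (\<Sum>p\<in>UNIV. vecz M $ p * f (axis p 1))"
    by (subst vector_as_sum_axis) (simp add: sum smult)
  also have "\<dots> = (\<Sum>a\<in>UNIV. \<Sum>b\<in>UNIV. f (axis (a, b) 1) * M$a$b)"
    by (simp add: sum_UNIV_pairs vecz_def mult.commute)
  also have "\<dots> = trace ((\<chi> b a. f (axis (a, b) 1)) ** M)"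
    by (simp add: trace_def matrix_matrix_mult_def) (rule sum.swap)
  finally show "f (vecz M) = trace ((\<chi> b a. f (axis (a, b) 1)) ** M)" .
qed

lemma QFI_channel_iter_ge:
  fixes K :: "real \<Rightarrow> 'k::finite \<Rightarrow> complex^'n::finite^'n"
    and f :: "complex^('n \<times> 'n) \<Rightarrow> complex"
  assumes tp: "\<And>\<theta>. trace_preserving (K \<theta>)"
    and der: "((\<lambda>\<theta>. liouville (K \<theta>)) has_vector_derivative T') (at x)"
    and dens: "density \<rho>"
    and add: "\<And>x y. f (x + y) = f x + f y" and smult: "\<And>c x. f (c *s x) = c * f x"
  obtains C where "C > 0" and "\<And>N. (cmod (f (matpow_deriv (liouville (K x)) T' N *v vecz \<rho>)))\<^sup>2
      \<le> C * QFI_at (\<lambda>\<theta>. (channel (K \<theta>) ^^ N) \<rho>) x"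
proof -
  obtain G :: "complex^'n^'n" where G: "\<And>M. f (vecz M) = trace (G ** M)"
    using functional_as_trace[OF add smult] by blast
  then have G': "f v = trace (G ** unvecz v)" for v
    by (metis vecz_unvecz)
  obtain C where C: "C > 0" and bound: "\<And>\<rho> M x. (\<And>\<theta>. density (\<rho> \<theta>)) \<Longrightarrow>
      (\<rho> has_vector_derivative M) (at x) \<Longrightarrow> (cmod (trace (G ** M)))\<^sup>2 \<le> C * QFI (\<rho> x) M"
    using QFI_ge_trace_square[of G] by blast
  have "(cmod (f (matpow_deriv (liouville (K x)) T' N *v vecz \<rho>)))\<^sup>2
      \<le> C * QFI_at (\<lambda>\<theta>. (channel (K \<theta>) ^^ N) \<rho>) x" for N
    using bound[OF density_channel_iter[OF tp dens] has_vector_derivative_channel_iter[OF der]]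
      vector_derivative_at[OF has_vector_derivative_channel_iter[OF der]]
    by (simp add: QFI_at_def G')
  with C show ?thesis using that by blast
qed

lemma liminf_quadratic_growth:
  fixes F y :: "nat \<Rightarrow> real"
  assumes a: "a > 0" and C: "C > 0"
    and y: "\<And>N. real N * a - C0 \<le> y N" and F: "\<And>N. (y N)\<^sup>2 \<le> C * F N"
  shows "Liminf sequentially (\<lambda>N. ereal (F N / (real N)\<^sup>2)) > 0"
proof -
  define \<kappa> where "\<kappa> = a\<^sup>2 / (4 * C)"
  obtain N0 :: nat where N0: "2 * \<bar>C0\<bar> / a < real N0"
    using reals_Archimedean2 by blast
  have "\<kappa> \<le> F N / (real N)\<^sup>2" if N: "N \<ge> max 1 N0" for N
  proof -
    have "real N0 * a \<le> real N * a"
      using N a by (intro mult_right_mono) auto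
    moreover have "2 * \<bar>C0\<bar> < real N0 * a"
      using N0 a by (simp add: field_simps)
    ultimately have "real N * a / 2 \<le> y N" using y[of N] by linarith
    then have "(real N * a / 2)\<^sup>2 \<le> (y N)\<^sup>2"
      using a by (intro power_mono) auto
    then have "(real N)\<^sup>2 * a\<^sup>2 \<le> 4 * C * F N"
      using F[of N] by (simp add: power2_eq_square field_simps)
    then show ?thesis
      using N C by (simp add: \<kappa>_def field_simps)
  qed
  then have "\<forall>N\<ge>max 1 N0. ereal \<kappa> \<le> ereal (F N / (real N)\<^sup>2)"
    by simp
  then have "\<forall>\<^sub>F N in sequentially. ereal \<kappa> \<le> ereal (F N / (real N)\<^sup>2)"
    unfolding eventually_sequentially by blast
  then have "ereal \<kappa> \<le> Liminf sequentially (\<lambda>N. ereal (F N / (real N)\<^sup>2))"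
    by (rule Liminf_bounded)
  moreover have "0 < ereal \<kappa>" using a C by (simp add: \<kappa>_def)
  ultimately show ?thesis
    using less_le_trans by blast
qed

lemma C1_differentiable_on_has_vector_derivative:
  "f C1_differentiable_on U \<Longrightarrow> x \<in> U \<Longrightarrow> (f has_vector_derivative vector_derivative f (at x)) (at x)"
  by (simp add: C1_differentiable_on_eq vector_derivative_works)

lemma peripheral_derivative_liouville:
  fixes K :: "real \<Rightarrow> 'k::finite \<Rightarrow> complex^'n::finite^'n"
    and lam :: "'p::finite \<Rightarrow> real \<Rightarrow> complex" and R :: "'p \<Rightarrow> real \<Rightarrow> complex^'n^'n"
  assumes channel: "\<And>\<theta>. trace_preserving (K \<theta>)"
    and U: "open U" "\<theta>0 \<in> U"
    and T_C1: "(\<lambda>\<theta>. liouville (K \<theta>)) C1_differentiable_on U"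
    and lam_C1: "\<And>i. lam i C1_differentiable_on U"
    and R_C1: "\<And>i. R i C1_differentiable_on U"
    and eig: "\<And>i \<theta>. \<theta> \<in> U \<Longrightarrow> liouville (K \<theta>) *v vecz (R i \<theta>) = lam i \<theta> *s vecz (R i \<theta>)"
    and periph: "cmod (lam j \<theta>0) = 1"
    and indep: "\<And>c. (\<Sum>i\<in>UNIV. c i *s vecz (R i \<theta>0)) = 0 \<Longrightarrow> (\<forall>i. c i = 0)"
    and complete: "\<And>v \<mu>. cmod \<mu> = 1 \<Longrightarrow> liouville (K \<theta>0) *v v = \<mu> *s v \<Longrightarrow>
               \<exists>c. v = (\<Sum>i\<in>UNIV. c i *s vecz (R i \<theta>0))"
  shows "peripheral_derivative (liouville (K \<theta>0)) (lam j \<theta>0) (\<lambda>i. vecz (R i \<theta>0))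
           (\<lambda>i. lam i \<theta>0) j (vector_derivative (\<lambda>\<theta>. liouville (K \<theta>)) (at \<theta>0))
           (\<lambda>i. vecz (vector_derivative (R i) (at \<theta>0))) (\<lambda>i. vector_derivative (lam i) (at \<theta>0))"
proof unfold_locales
  show "\<exists>B. \<forall>N. norm (matpow (liouville (K \<theta>0)) N *v v) \<le> B" for v
    by (rule liouville_power_bounded[OF channel])
  show "cmod (lam j \<theta>0) = 1" by (rule periph)
  show "liouville (K \<theta>0) *v vecz (R i \<theta>0) = lam i \<theta>0 *s vecz (R i \<theta>0)" for i
    by (rule eig[OF U(2)])
  show "\<forall>i. c i = 0" if "(\<Sum>i\<in>UNIV. c i *s vecz (R i \<theta>0)) = 0" for c
    using indep that by blast
  show "\<exists>c. v = (\<Sum>i\<in>UNIV. c i *s vecz (R i \<theta>0))" if "liouville (K \<theta>0) *v v = lam j \<theta>0 *s v" for v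
    using complete[OF periph that] .
  show "lam j \<theta>0 = lam j \<theta>0" ..
  show "vector_derivative (\<lambda>\<theta>. liouville (K \<theta>)) (at \<theta>0) *v vecz (R i \<theta>0)
      + liouville (K \<theta>0) *v vecz (vector_derivative (R i) (at \<theta>0))
      = vector_derivative (lam i) (at \<theta>0) *s vecz (R i \<theta>0)
      + lam i \<theta>0 *s vecz (vector_derivative (R i) (at \<theta>0))" for i
    by (rule eigen_equation_derivative[OF C1_differentiable_on_has_vector_derivative[OF T_C1 U(2)]
          bounded_linear.has_vector_derivative[OF bounded_linear_vecz
            C1_differentiable_on_has_vector_derivative[OF R_C1 U(2)]]
          C1_differentiable_on_has_vector_derivative[OF lam_C1 U(2)] U eig])
qed

theorem corollary1:
  fixes K :: "real \<Rightarrow> 'k::finite \<Rightarrow> complex^'n::finite^'n"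
    and \<theta>0 :: real
    and U :: "real set"
    and lam :: "'p::finite \<Rightarrow> real \<Rightarrow> complex"
    and R :: "'p \<Rightarrow> real \<Rightarrow> complex^'n^'n"
  assumes channel: "\<And>\<theta>. trace_preserving (K \<theta>)"
    and U: "open U" "\<theta>0 \<in> U"
    and T_C1: "(\<lambda>\<theta>. liouville (K \<theta>)) C1_differentiable_on U"
    and lam_C1: "\<And>i. lam i C1_differentiable_on U"
    and R_C1: "\<And>i. R i C1_differentiable_on U"
    and eig: "\<And>i \<theta>. \<theta> \<in> U \<Longrightarrow>
               liouville (K \<theta>) *v vecz (R i \<theta>) = lam i \<theta> *s vecz (R i \<theta>)"
    and periph: "\<And>i. cmod (lam i \<theta>0) = 1"
    and indep: "\<And>c. (\<Sum>i\<in>UNIV. c i *s vecz (R i \<theta>0)) = 0 \<Longrightarrow> (\<forall>i. c i = 0)"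
    and complete: "\<And>v \<mu>. cmod \<mu> = 1 \<Longrightarrow> liouville (K \<theta>0) *v v = \<mu> *s v \<Longrightarrow>
               \<exists>c. v = (\<Sum>i\<in>UNIV. c i *s vecz (R i \<theta>0))"
    and orth: "\<And>i j. i \<noteq> j \<Longrightarrow> hs_inner (R i \<theta>0) (R j \<theta>0) = 0"
    and moving: "\<exists>j. vector_derivative (lam j) (at \<theta>0) \<noteq> 0"
  shows "\<exists>\<rho>0. density \<rho>0 \<and>
           Liminf sequentially
             (\<lambda>N::nat. ereal (QFI_at (\<lambda>\<theta>. (channel (K \<theta>) ^^ N) \<rho>0) \<theta>0 / (real N)\<^sup>2)) > 0"
proof -
  obtain j where moving_j: "vector_derivative (lam j) (at \<theta>0) \<noteq> 0"
    using moving by blast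
  let ?T' = "vector_derivative (\<lambda>\<theta>. liouville (K \<theta>)) (at \<theta>0)"
  interpret P: peripheral_derivative "liouville (K \<theta>0)" "lam j \<theta>0" "\<lambda>i. vecz (R i \<theta>0)"
      "\<lambda>i. lam i \<theta>0" j ?T' "\<lambda>i. vecz (vector_derivative (R i) (at \<theta>0))"
      "\<lambda>i. vector_derivative (lam i) (at \<theta>0)"
    by (rule peripheral_derivative_liouville[OF channel U T_C1 lam_C1 R_C1 eig periph indep complete])
  obtain \<rho>0 where \<rho>0: "density \<rho>0" and ell_\<rho>0: "P.ell (vecz \<rho>0) \<noteq> 0"
    using exists_density_not_annihilated[OF P.ell_add P.ell_smult, of "vecz (R j \<theta>0)"]
      P.ell_eigenvector[OF P.eigenvalue_j] by auto
  obtain C0 where growth: "\<And>N. real N * cmod (vector_derivative (lam j) (at \<theta>0) * P.ell (vecz \<rho>0)) - C0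
      \<le> cmod (P.ell (matpow_deriv (liouville (K \<theta>0)) ?T' N *v vecz \<rho>0))"
    using P.ell_matpow_deriv_linear_growth by blast
  obtain C where "C > 0" and "\<And>N. (cmod (P.ell (matpow_deriv (liouville (K \<theta>0)) ?T' N *v vecz \<rho>0)))\<^sup>2
      \<le> C * QFI_at (\<lambda>\<theta>. (channel (K \<theta>) ^^ N) \<rho>0) \<theta>0"
    using QFI_channel_iter_ge[OF channel C1_differentiable_on_has_vector_derivative[OF T_C1 U(2)]
        \<rho>0 P.ell_add P.ell_smult] by blast
  then show ?thesis
    using liminf_quadratic_growth[OF _ _ growth] moving_j ell_\<rho>0 \<rho>0 by auto
qed

end
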